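(* Let $M$, the Newtonian dynamical system admitting the normal shift, and the covector field $\mathbf b$ be as in the context, and suppose that $\Vert\mathbf b\Vert<\infty$ for some function $f$ as in the context. Let $x^1,\dots,x^n$ be local coordinates on a chart of $M$ containing $p_0$, with $x^i(p_0)=0$, and let $w>0$. Then the solution $V(x^1,\dots,x^n)$ of the Cauchy problem $\frac{\partial V}{\partial x^i}=b_i(x^1,\dots,x^n,V)$ ($i=1,\dots,n$), $V(0,\dots,0)=w$, which exists and is unique near $p_0$, can be continued to any point of the chart where the local coordinates $x^1,\dots,x^n$ are defined.
   Context: $M$ is a Riemannian manifold with metric $g$; a Newtonian dynamical system on $M$ is given in local coordinates by $\ddot x^k+\sum_{i,j}\Gamma^k_{ij}\dot x^i\dot x^j=F^k(x,\dot x)$ with $\Gamma$ the Levi-Civita connection. Write $v=|\dot x|$, $N^i=\dot x^i/v$, $N_k=\sum_i g_{ki}N^i$. The system admits the normal shift of hypersurfaces if for every hypersurface $S$, every $p_0\in S$ and $\nu_0>0$ there are a neighborhood $S'$ of $p_0$ in $S$ and a smooth positive $\nu$ on $S'$ with $\nu(p_0)=\nu_0$ such that shifting points $p\in S'$ along trajectories with initial velocity $\nu(p)\mathbf n(p)$ ($\mathbf n$ unit normal) produces hypersurfaces orthogonal to the trajectories. For such systems $F_k=a\,N_k+v\sum_i b_i(2N^iN_k-\delta^i_k)$ with smooth $a(p,v)$, $b_i(p,v)$ on $M\times\mathbb R^+$ ($\mathbf b(p,v)\in T^*_pM$) satisfying $\left(\partial_j+b_j\partial_v\right)b_i=\left(\partial_i+b_i\partial_v\right)b_j$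 and $\left(\partial_i+b_i\partial_v\right)a=(\partial_v b_i)a$ in local coordinates $x^1,\dots,x^n,v$; the first of these is the compatibility condition of the Pfaff system $\partial V/\partial x^i=b_i(x,V)$. $f:\mathbb R^+\to\mathbb R^+$ is positive with $\int_{v_0}^v dv/f\to+\infty$ as $v\to+\infty$ and $\to-\infty$ as $v\to0$; the $f$-norm is $\Vert\mathbf b\Vert=\sup_{p,v}|\mathbf b|/f(v)$, $|\mathbf b|^2=\sum g^{ij}b_ib_j$. *)

theory Defs
  imports "HOL-Analysis.Analysis"
begin

definition dir_deriv :: "('a::real_normed_vector \<Rightarrow> real) \<Rightarrow> 'a \<Rightarrow> 'a \<Rightarrow> real" where
  "dir_deriv h u x = deriv (\<lambda>t. h (x + t *\<^sub>R u)) 0"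

fun iter_pd :: "'a::real_normed_vector list \<Rightarrow> ('a \<Rightarrow> real) \<Rightarrow> 'a \<Rightarrow> real" where
  "iter_pd [] h = h"
| "iter_pd (u # us) h = dir_deriv (iter_pd us h) u"

definition smooth_on :: "'a::euclidean_space set \<Rightarrow> ('a \<Rightarrow> real) \<Rightarrow> bool" where
  "smooth_on S h \<longleftrightarrow>
     (\<forall>us. set us \<subseteq> Basis \<longrightarrow>
        continuous_on S (iter_pd us h) \<and>
        (\<forall>u\<in>Basis. \<forall>z\<in>S.
           ((\<lambda>t. iter_pd us h (z + t *\<^sub>R u)) has_real_derivative iter_pd (u # us) h z) (at 0)))"

definition pd_x :: "('n::finite) \<Rightarrow> ((real^'n) \<times> real \<Rightarrow> real) \<Rightarrow> real^'n \<Rightarrow> real \<Rightarrow> real" where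
  "pd_x j h x v = dir_deriv h (axis j 1, 0) (x, v)"

definition pd_v :: "((real^('n::finite)) \<times> real \<Rightarrow> real) \<Rightarrow> real^'n \<Rightarrow> real \<Rightarrow> real" where
  "pd_v h x v = dir_deriv h (0, 1) (x, v)"

definition bcomp :: "(real^'n::finite \<Rightarrow> real \<Rightarrow> real^'n) \<Rightarrow> 'n \<Rightarrow> (real^'n) \<times> real \<Rightarrow> real" where
  "bcomp b i = (\<lambda>(x, v). b x v $ i)"

definition gnorm :: "real^'n^'n \<Rightarrow> real^'n \<Rightarrow> real" where
  "gnorm G c = sqrt (c \<bullet> (matrix_inv G *v c))"

definition Fint :: "(real \<Rightarrow> real) \<Rightarrow> real \<Rightarrow> real \<Rightarrow> real" where
  "Fint f v0 v = (if v0 \<le> v then integral {v0..v} (\<lambda>s. 1 / f s)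
                  else - integral {v..v0} (\<lambda>s. 1 / f s))"

definition solves_pfaff :: "(real^'n::finite \<Rightarrow> real \<Rightarrow> real^'n) \<Rightarrow> (real^'n) set \<Rightarrow> (real^'n \<Rightarrow> real) \<Rightarrow> bool" where
  "solves_pfaff b N V \<longleftrightarrow> continuous_on N V \<and> (\<forall>x\<in>N. V x > 0 \<and>
     (\<forall>i. ((\<lambda>t. V (x + t *\<^sub>R axis i 1)) has_real_derivative (b x (V x) $ i)) (at 0)))"

definition continues_along :: "(real^'n::finite \<Rightarrow> real \<Rightarrow> real^'n) \<Rightarrow> (real^'n) set \<Rightarrow> real \<Rightarrow> (real \<Rightarrow> real^'n) \<Rightarrow> bool" where
  "continues_along b U w \<gamma> \<longleftrightarrow>
     (\<exists>W :: real \<Rightarrow> real. W 0 = w \<and>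
        (\<forall>t\<in>{0..1}. \<exists>N V. open N \<and> \<gamma> t \<in> N \<and> N \<subseteq> U \<and> solves_pfaff b N V \<and>
            (\<exists>e>0. \<forall>s\<in>{0..1}. \<bar>s - t\<bar> < e \<longrightarrow> \<gamma> s \<in> N \<and> V (\<gamma> s) = W s)))"

end

theory Submission
  imports Defs
begin

text \<open>Near a point \<open>c\<close>, a solution with value \<open>v\<close> at \<open>c\<close> is built along rays: \<open>\<phi>(t, y)\<close> solves
  \<open>d\<phi>/dt = b(c + t y, \<phi>) \<bullet> y\<close>, \<open>\<phi>(0, y) = v\<close>, and \<open>V(x) = \<phi>(1, x - c)\<close>. The bound
  \<open>|b| \<le> A f\<close> together with the divergence of \<open>\<integral> dv / f\<close> at \<open>0\<close> and \<open>\<infinity>\<close> traps \<open>\<phi>\<close> in a compact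
  interval of \<open>(0, \<infinity>)\<close>, so the rays exist on balls of a radius that is uniform along a compact set.
  By the compatibility condition, \<open>\<phi>(t, y + h e\<^sub>i) - \<phi>(t, y) - h t b\<^sub>i\<close> obeys a linear Gronwall
  inequality with forcing \<open>o(h)\<close>, whence \<open>\<partial>V/\<partial>x\<^sup>i = b\<^sub>i\<close>. Two solutions agreeing at one point of a
  convex set agree on it (Gronwall again along segments), so local solutions on finitely many balls
  covering a path glue to a continuation along the path.\<close>

section \<open>The Riemannian norm\<close>

lemma inner_matrix_vector_symmetric:
  fixes G :: "real^'n^'n"
  assumes "transpose G = G"
  shows "x \<bullet> (G *v y) = y \<bullet> (G *v x)"
proof -
  have "x \<bullet> (G *v y) = (\<Sum>i\<in>UNIV. \<Sum>j\<in>UNIV. x$i * G$i$j * y$j)"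
    by (simp add: inner_vec_def matrix_vector_mult_def sum_distrib_left mult.assoc)
  also have "\<dots> = (\<Sum>j\<in>UNIV. \<Sum>i\<in>UNIV. x$i * G$i$j * y$j)" by (rule sum.swap)
  also have "\<dots> = (\<Sum>j\<in>UNIV. \<Sum>i\<in>UNIV. y$j * G$j$i * x$i)"
  proof -
    have "G$i$j = G$j$i" for i j using assms by (metis transpose_def vec_lambda_beta)
    then show ?thesis by (simp add: mult.commute mult.left_commute)
  qed
  also have "\<dots> = y \<bullet> (G *v x)"
    by (simp add: inner_vec_def matrix_vector_mult_def sum_distrib_left mult.assoc)
  finally show ?thesis .
qed

lemma quadratic_form_le_sum_abs:
  fixes G :: "real^'n^'n"
  shows "c \<bullet> (G *v c) \<le> (\<Sum>i\<in>UNIV. \<Sum>j\<in>UNIV. \<bar>G $ i $ j\<bar>) * (c \<bullet> c)"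
proof -
  have "c \<bullet> (G *v c) = (\<Sum>i\<in>UNIV. \<Sum>j\<in>UNIV. c $ i * G $ i $ j * c $ j)"
    by (simp add: inner_vec_def matrix_vector_mult_def sum_distrib_left mult.assoc)
  also have "\<dots> \<le> (\<Sum>i\<in>UNIV. \<Sum>j\<in>UNIV. \<bar>G $ i $ j\<bar> * (c \<bullet> c))"
  proof (intro sum_mono)
    fix i j
    have "\<bar>c $ i\<bar> * \<bar>c $ j\<bar> \<le> norm c * norm c"
      by (intro mult_mono) (simp_all add: component_le_norm_cart)
    then have "\<bar>c $ i\<bar> * \<bar>c $ j\<bar> \<le> c \<bullet> c" by (simp add: power2_norm_eq_inner[symmetric] power2_eq_square)
    then have "\<bar>G $ i $ j\<bar> * (\<bar>c $ i\<bar> * \<bar>c $ j\<bar>) \<le> \<bar>G $ i $ j\<bar> * (c \<bullet> c)"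
      by (intro mult_left_mono) auto
    moreover have "c $ i * G $ i $ j * c $ j \<le> \<bar>c $ i * G $ i $ j * c $ j\<bar>" by simp
    moreover have "\<bar>c $ i * G $ i $ j * c $ j\<bar> = \<bar>G $ i $ j\<bar> * (\<bar>c $ i\<bar> * \<bar>c $ j\<bar>)"
      by (simp add: abs_mult)
    ultimately show "c $ i * G $ i $ j * c $ j \<le> \<bar>G $ i $ j\<bar> * (c \<bullet> c)" by linarith
  qed
  also have "\<dots> = (\<Sum>i\<in>UNIV. \<Sum>j\<in>UNIV. \<bar>G $ i $ j\<bar>) * (c \<bullet> c)" by (simp add: sum_distrib_right)
  finally show ?thesis .
qed

lemma posdef_matrix_right_inverse:
  fixes G :: "real^'n^'n"
  assumes pd: "\<And>c. c \<noteq> 0 \<Longrightarrow> c \<bullet> (G *v c) > 0"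
  shows "G ** matrix_inv G = mat 1"
proof -
  have "inj ((*v) G)"
  proof (rule injI)
    fix x y assume "G *v x = G *v y"
    then have "G *v (x - y) = 0" by (simp add: matrix_vector_mult_diff_distrib)
    then show "x = y" using pd[of "x - y"] by fastforce
  qed
  then have "invertible G"
    using matrix_left_invertible_injective invertible_left_inverse by blast
  then show ?thesis
    unfolding invertible_def matrix_inv_def by (metis (mono_tags, lifting) someI_ex)
qed

lemma gnorm_eq_dual:
  fixes G :: "real^'n^'n"
  assumes pd: "\<And>c. c \<noteq> 0 \<Longrightarrow> c \<bullet> (G *v c) > 0"
  obtains d where "G *v d = c" "gnorm G c = sqrt (d \<bullet> (G *v d))" "d \<bullet> (G *v d) \<ge> 0"
proof
  define d where "d = matrix_inv G *v c"
  show Gd: "G *v d = c" unfolding d_def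
    by (simp add: posdef_matrix_right_inverse[OF pd] matrix_vector_mul_assoc)
  show "gnorm G c = sqrt (d \<bullet> (G *v d))" unfolding gnorm_def Gd d_def[symmetric] by (rule arg_cong[OF inner_commute])
  show "d \<bullet> (G *v d) \<ge> 0" using pd[of d] by (cases "d = 0") auto
qed

text \<open>Cauchy--Schwarz for the inner product defined by \<open>G\<close>, applied to \<open>c\<close> and its dual
  vector \<open>d = G\<^sup>-\<^sup>1 c\<close>: \<open>(c \<bullet> c)\<^sup>2 \<le> (c \<bullet> G c) (d \<bullet> G d)\<close>.\<close>
lemma norm_le_sqrt_gnorm:
  fixes G :: "real^'n^'n"
  assumes sym: "transpose G = G"
    and pd: "\<And>c. c \<noteq> 0 \<Longrightarrow> c \<bullet> (G *v c) > 0"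
    and M: "\<And>c. c \<bullet> (G *v c) \<le> M * (c \<bullet> c)"
  shows "norm c \<le> sqrt M * gnorm G c"
proof -
  obtain d where Gd: "G *v d = c" and gn: "gnorm G c = sqrt (d \<bullet> (G *v d))"
    and cd0: "d \<bullet> (G *v d) \<ge> 0"
    using gnorm_eq_dual[OF pd] by blast
  have cd: "c \<bullet> d = d \<bullet> (G *v d)" using Gd by (simp add: inner_commute)
  have "c \<bullet> c \<le> M * (c \<bullet> d)"
  proof (cases "c = 0")
    case False
    then have "d \<noteq> 0" using Gd by auto
    then have cdp: "c \<bullet> d > 0" using pd[of d] cd by simp
    define l where "l = (c \<bullet> c) / (c \<bullet> d)"
    have "0 \<le> (c - l *\<^sub>R d) \<bullet> (G *v (c - l *\<^sub>R d))"
      using pd[of "c - l *\<^sub>R d"] by (cases "c - l *\<^sub>R d = 0") auto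
    also have "\<dots> = c \<bullet> (G *v c) - 2 * l * (c \<bullet> c) + l^2 * (c \<bullet> d)"
      using inner_matrix_vector_symmetric[OF sym, of d c] Gd cd
      by (simp add: matrix_vector_mult_diff_distrib matrix_vector_mult_scaleR inner_diff_left
          inner_diff_right algebra_simps power2_eq_square inner_commute)
    also have "\<dots> = c \<bullet> (G *v c) - (c \<bullet> c)^2 / (c \<bullet> d)"
      using cdp unfolding l_def by (simp add: field_simps power2_eq_square)
    finally have "(c \<bullet> c)^2 \<le> c \<bullet> (G *v c) * (c \<bullet> d)"
      using cdp by (simp add: field_simps)
    also have "\<dots> \<le> M * (c \<bullet> c) * (c \<bullet> d)"
      using M cd0 cd by (metis mult_right_mono)
    finally have "(c \<bullet> c) * (c \<bullet> c) \<le> (c \<bullet> c) * (M * (c \<bullet> d))"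
      by (simp add: power2_eq_square algebra_simps)
    then show ?thesis using False by (simp add: mult_le_cancel_left)
  qed simp
  then have "norm c \<le> sqrt (M * (c \<bullet> d))" by (simp add: norm_eq_sqrt_inner)
  also have "\<dots> = sqrt M * gnorm G c" using gn cd by (simp add: real_sqrt_mult)
  finally show ?thesis .
qed

lemma compact_bound_finite_family:
  fixes F :: "'i \<Rightarrow> 'a::metric_space \<Rightarrow> real"
  assumes "compact Q" "finite I" "\<And>i. i \<in> I \<Longrightarrow> continuous_on Q (F i)"
  shows "\<exists>B\<ge>0. \<forall>z\<in>Q. \<forall>i\<in>I. \<bar>F i z\<bar> \<le> B"
proof -
  have "continuous_on Q (\<lambda>z. \<Sum>i\<in>I. \<bar>F i z\<bar>)" using assms(3) by (intro continuous_intros)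
  then have "bounded ((\<lambda>z. \<Sum>i\<in>I. \<bar>F i z\<bar>) ` Q)"
    using compact_continuous_image[OF _ assms(1)] compact_imp_bounded by blast
  then obtain B where B: "\<And>z. z \<in> Q \<Longrightarrow> \<bar>\<Sum>i\<in>I. \<bar>F i z\<bar>\<bar> \<le> B" unfolding bounded_iff by auto
  have "\<bar>F i z\<bar> \<le> max B 0" if "z \<in> Q" "i \<in> I" for z i
    using member_le_sum[of i I "\<lambda>i. \<bar>F i z\<bar>"] B[OF that(1)] that(2) assms(2) by force
  then show ?thesis by (intro exI[of _ "max B 0"]) auto
qed

lemma growth_bound_from_gnorm:
  fixes g :: "real^'n \<Rightarrow> real^'n^'n" and b :: "real^'n \<Rightarrow> real \<Rightarrow> real^'n"
  assumes g_cont: "\<And>i j. continuous_on U (\<lambda>x. g x $ i $ j)"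
    and g_sym: "\<And>x. x \<in> U \<Longrightarrow> transpose (g x) = g x"
    and g_posdef: "\<And>x c. x \<in> U \<Longrightarrow> c \<noteq> 0 \<Longrightarrow> c \<bullet> (g x *v c) > 0"
    and C: "\<forall>x\<in>U. \<forall>v>0. gnorm (g x) (b x v) \<le> C * f v"
    and K: "compact K" "K \<subseteq> U"
  shows "\<exists>A. \<forall>x\<in>K. \<forall>v>0. norm (b x v) \<le> A * f v"
proof -
  obtain M where M: "M \<ge> 0" "\<And>x i j. x \<in> K \<Longrightarrow> \<bar>g x $ i $ j\<bar> \<le> M"
    using compact_bound_finite_family[OF K(1), of UNIV "\<lambda>(i, j) x. g x $ i $ j"]
      continuous_on_subset[OF g_cont K(2)] by fastforce
  define M' where "M' = real CARD('n) * real CARD('n) * M"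
  have quad: "c \<bullet> (g x *v c) \<le> M' * (c \<bullet> c)" if "x \<in> K" for x c
  proof -
    have "(\<Sum>i\<in>UNIV. \<Sum>j\<in>UNIV. \<bar>g x $ i $ j\<bar>) \<le> (\<Sum>i\<in>(UNIV::'n set). \<Sum>j\<in>(UNIV::'n set). M)"
      using M(2)[OF that] by (intro sum_mono) auto
    then have "(\<Sum>i\<in>UNIV. \<Sum>j\<in>UNIV. \<bar>g x $ i $ j\<bar>) \<le> M'" unfolding M'_def by simp
    then show ?thesis
      using quadratic_form_le_sum_abs[of c "g x"] mult_right_mono[of _ M' "c \<bullet> c"] by force
  qed
  show ?thesis
  proof (intro exI[of _ "sqrt M' * C"] ballI allI impI)
    fix x and v :: real assume x: "x \<in> K" and v: "v > 0"
    have xU: "x \<in> U" using x K by auto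
    have "norm (b x v) \<le> sqrt M' * gnorm (g x) (b x v)"
      by (rule norm_le_sqrt_gnorm[OF g_sym[OF xU] g_posdef[OF xU] quad[OF x]])
    also have "\<dots> \<le> sqrt M' * (C * f v)" using C xU v M(1) unfolding M'_def by (intro mult_left_mono) auto
    finally show "norm (b x v) \<le> sqrt M' * C * f v" by (simp add: mult.assoc)
  qed
qed

section \<open>First-order approximation from partial derivatives\<close>

lemma finite_ex_pos_common:
  fixes P :: "'a \<Rightarrow> real \<Rightarrow> bool"
  assumes "finite I" "\<And>j. j \<in> I \<Longrightarrow> \<exists>d>0. P j d"
    and mono: "\<And>j d d'. P j d \<Longrightarrow> 0 < d' \<Longrightarrow> d' \<le> d \<Longrightarrow> P j d'"
  shows "\<exists>d>0. \<forall>j\<in>I. P j d"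
  using assms(1,2)
proof (induction I rule: finite_induct)
  case empty then show ?case by (intro exI[of _ 1]) auto
next
  case (insert x I)
  then obtain d1 where d1: "d1 > 0" "\<forall>j\<in>I. P j d1" by auto
  obtain d2 where d2: "d2 > 0" "P x d2" using insert(4) by auto
  show ?case using d1 d2 mono by (intro exI[of _ "min d1 d2"]) auto
qed

lemma uniformly_continuous_finite_family:
  fixes F :: "'i \<Rightarrow> 'a::metric_space \<Rightarrow> real"
  assumes "compact Q" "finite I" "\<And>i. i \<in> I \<Longrightarrow> continuous_on Q (F i)" "\<epsilon> > 0"
  shows "\<exists>d>0. \<forall>i\<in>I. \<forall>x\<in>Q. \<forall>x'\<in>Q. dist x' x < d \<longrightarrow> \<bar>F i x' - F i x\<bar> < \<epsilon>"
proof (rule finite_ex_pos_common[OF assms(2)])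
  fix i assume "i \<in> I"
  then have "uniformly_continuous_on Q (F i)" using assms(1,3) by (intro compact_uniformly_continuous)
  then show "\<exists>d>0. \<forall>x\<in>Q. \<forall>x'\<in>Q. dist x' x < d \<longrightarrow> \<bar>F i x' - F i x\<bar> < \<epsilon>"
    unfolding uniformly_continuous_on_def dist_real_def using assms(4) by blast
qed auto

lemma sum_abs_vec_le_card_norm: "(\<Sum>j\<in>UNIV. \<bar>(y::real^'n) $ j\<bar>) \<le> real CARD('n) * norm y"
proof -
  have "(\<Sum>j\<in>UNIV. \<bar>y $ j\<bar>) \<le> (\<Sum>j\<in>(UNIV::'n set). norm y)"
    by (rule sum_mono) (simp add: component_le_norm_cart)
  then show ?thesis by simp
qed

lemma abs_sum_mult_le:
  fixes a y :: "'n::finite \<Rightarrow> real"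
  assumes "\<And>j. \<bar>a j\<bar> \<le> B"
  shows "\<bar>\<Sum>j\<in>UNIV. a j * y j\<bar> \<le> B * (\<Sum>j\<in>UNIV. \<bar>y j\<bar>)"
proof -
  have "\<bar>\<Sum>j\<in>UNIV. a j * y j\<bar> \<le> (\<Sum>j\<in>UNIV. \<bar>a j * y j\<bar>)" by (rule sum_abs)
  also have "\<dots> \<le> (\<Sum>j\<in>UNIV. B * \<bar>y j\<bar>)"
    by (rule sum_mono) (simp add: abs_mult mult_right_mono assms)
  finally show ?thesis by (simp add: sum_distrib_left)
qed

lemma norm_partial_Basis_sum_le:
  fixes h :: "'a::euclidean_space"
  assumes "T \<subseteq> Basis" "w \<in> Basis" "w \<notin> T" "\<bar>t\<bar> \<le> \<bar>h \<bullet> w\<bar>"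
  shows "norm ((\<Sum>u\<in>T. (h \<bullet> u) *\<^sub>R u) + t *\<^sub>R w) \<le> real DIM('a) * norm h"
proof -
  have fT: "finite T" using assms(1) finite_Basis finite_subset by blast
  have "norm ((\<Sum>u\<in>T. (h \<bullet> u) *\<^sub>R u) + t *\<^sub>R w) \<le> (\<Sum>u\<in>T. norm ((h \<bullet> u) *\<^sub>R u)) + norm (t *\<^sub>R w)"
    using norm_sum[of "\<lambda>u. (h \<bullet> u) *\<^sub>R u" T] norm_triangle_ineq[of "\<Sum>u\<in>T. (h \<bullet> u) *\<^sub>R u" "t *\<^sub>R w"]
    by linarith
  also have "\<dots> = (\<Sum>u\<in>T. \<bar>h \<bullet> u\<bar>) + \<bar>t\<bar>"
    using assms(1,2) by (auto intro!: sum.cong)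
  also have "\<dots> \<le> (\<Sum>u\<in>insert w T. \<bar>h \<bullet> u\<bar>)" using fT assms(3,4) by simp
  also have "\<dots> \<le> (\<Sum>u\<in>Basis. \<bar>h \<bullet> u\<bar>)"
    using assms by (intro sum_mono2) auto
  also have "\<dots> \<le> (\<Sum>u\<in>(Basis::'a set). norm h)"
    by (rule sum_mono) (simp add: Basis_le_norm)
  finally show ?thesis by simp
qed

lemma increment_along_direction_le:
  fixes F D :: "'a::real_normed_vector \<Rightarrow> real"
  assumes der: "\<And>t. \<bar>t\<bar> \<le> \<bar>a\<bar> \<Longrightarrow> ((\<lambda>s. F (p + s *\<^sub>R w)) has_real_derivative D (p + t *\<^sub>R w)) (at t)"
    and close: "\<And>t. \<bar>t\<bar> \<le> \<bar>a\<bar> \<Longrightarrow> \<bar>D (p + t *\<^sub>R w) - d\<bar> \<le> e"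
  shows "\<bar>F (p + a *\<^sub>R w) - F p - a * d\<bar> \<le> e * \<bar>a\<bar>"
proof -
  obtain \<xi> where \<xi>: "\<bar>\<xi>\<bar> \<le> \<bar>a\<bar>" "F (p + a *\<^sub>R w) - F p = a * D (p + \<xi> *\<^sub>R w)"
  proof -
    consider "a = 0" | "a > 0" | "a < 0" by linarith
    then show ?thesis
    proof cases
      case 2
      from MVT2[OF 2, of "\<lambda>s. F (p + s *\<^sub>R w)" "\<lambda>t. D (p + t *\<^sub>R w)"] der 2
      obtain \<xi> where "0 < \<xi>" "\<xi> < a" "F (p + a *\<^sub>R w) - F p = a * D (p + \<xi> *\<^sub>R w)"
        by force
      then show ?thesis using that[of \<xi>] by auto
    next
      case 3
      from MVT2[OF 3, of "\<lambda>s. F (p + s *\<^sub>R w)" "\<lambda>t. D (p + t *\<^sub>R w)"] der 3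
      obtain \<xi> where "a < \<xi>" "\<xi> < 0" "F p - F (p + a *\<^sub>R w) = (0 - a) * D (p + \<xi> *\<^sub>R w)"
        by force
      then show ?thesis using that[of \<xi>] by (auto simp: algebra_simps)
    qed (use that in auto)
  qed
  have "\<bar>a\<bar> * \<bar>D (p + \<xi> *\<^sub>R w) - d\<bar> \<le> \<bar>a\<bar> * e" by (rule mult_left_mono[OF close[OF \<xi>(1)]]) simp
  then show ?thesis using \<xi>(2) by (simp add: abs_mult mult.commute flip: right_diff_distrib)
qed

lemma linear_approx_by_coordinate_steps:
  fixes F :: "'a::euclidean_space \<Rightarrow> real" and D :: "'a \<Rightarrow> real"
  assumes step: "\<And>T w. T \<subseteq> Basis \<Longrightarrow> w \<in> Basis \<Longrightarrow> w \<notin> T \<Longrightarrow>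
      \<bar>F (z + (\<Sum>u\<in>T. (h \<bullet> u) *\<^sub>R u) + (h \<bullet> w) *\<^sub>R w) - F (z + (\<Sum>u\<in>T. (h \<bullet> u) *\<^sub>R u))
        - (h \<bullet> w) * D w\<bar> \<le> e"
  shows "\<bar>F (z + h) - F z - (\<Sum>u\<in>Basis. (h \<bullet> u) * D u)\<bar> \<le> real DIM('a) * e"
proof -
  have "\<bar>F (z + (\<Sum>u\<in>T. (h \<bullet> u) *\<^sub>R u)) - F z - (\<Sum>u\<in>T. (h \<bullet> u) * D u)\<bar> \<le> real (card T) * e"
    if "T \<subseteq> Basis" for T
    using that
  proof (induction T rule: infinite_finite_induct)
    case (infinite T) then show ?case using finite_Basis finite_subset by blast
  next
    case (insert w T)
    then have "\<bar>F (z + (\<Sum>u\<in>T. (h \<bullet> u) *\<^sub>R u) + (h \<bullet> w) *\<^sub>R w) - F z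
        - ((h \<bullet> w) * D w + (\<Sum>u\<in>T. (h \<bullet> u) * D u))\<bar> \<le> e + real (card T) * e"
      using step[of T w] by (smt (verit) insert_subset)
    then show ?case using insert(1,2) by (simp add: algebra_simps)
  qed simp
  from this[of Basis] show ?thesis by (simp add: euclidean_representation)
qed

lemma uniform_linear_approx_from_partials:
  fixes F :: "'a::euclidean_space \<Rightarrow> real" and D :: "'a \<Rightarrow> 'a \<Rightarrow> real"
  assumes S: "open S" and Q: "compact Q" "Q \<subseteq> S"
   and der: "\<And>u z. u \<in> Basis \<Longrightarrow> z \<in> S \<Longrightarrow> ((\<lambda>t. F (z + t *\<^sub>R u)) has_real_derivative D u z) (at 0)"
   and cont: "\<And>u. u \<in> Basis \<Longrightarrow> continuous_on S (D u)"
   and eps: "\<epsilon> > 0"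
  shows "\<exists>\<delta>>0. \<forall>z\<in>Q. \<forall>h. norm h < \<delta> \<longrightarrow>
     \<bar>F (z + h) - F z - (\<Sum>u\<in>Basis. (h \<bullet> u) * D u z)\<bar> \<le> \<epsilon> * norm h"
proof -
  obtain e where e: "e > 0" "\<And>x. x \<in> Q \<Longrightarrow> ball x e \<subseteq> S"
    using Heine_Borel_lemma[OF Q(1), of "{S}"] Q(2) S by auto
  define Q' where "Q' = {x + y | x y. x \<in> Q \<and> y \<in> cball 0 (e/2)}"
  have cQ': "compact Q'" unfolding Q'_def by (intro compact_sums Q(1) compact_cball)
  have inQ': "z + y \<in> Q'" if "z \<in> Q" "norm y \<le> e/2" for z y
    unfolding Q'_def using that by force
  have Q'S: "Q' \<subseteq> S"
    unfolding Q'_def using e by (force simp: dist_norm)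
  define n where "n = real DIM('a)"
  have n1: "n \<ge> 1" unfolding n_def by (simp add: DIM_positive Suc_leI)
  define \<epsilon>' where "\<epsilon>' = \<epsilon> / n"
  have \<epsilon>': "\<epsilon>' > 0" using eps n1 by (simp add: \<epsilon>'_def)
  obtain d0 where d0: "d0 > 0"
    and ucont: "\<And>u x x'. u \<in> Basis \<Longrightarrow> x \<in> Q' \<Longrightarrow> x' \<in> Q' \<Longrightarrow> dist x' x < d0 \<Longrightarrow> \<bar>D u x' - D u x\<bar> < \<epsilon>'"
    using uniformly_continuous_finite_family[where F=D, OF cQ' finite_Basis continuous_on_subset[OF cont Q'S] \<epsilon>']
    by blast
  define \<delta> where "\<delta> = min (e/2) d0 / n"
  have \<delta>: "\<delta> > 0" unfolding \<delta>_def using d0 e(1) n1 by simp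
  show ?thesis
  proof (intro exI[of _ \<delta>] conjI \<delta> ballI allI impI)
    fix z and h :: 'a assume z: "z \<in> Q" and h: "norm h < \<delta>"
    have nh: "n * norm h < min (e/2) d0" using h n1 unfolding \<delta>_def by (simp add: field_simps)
    have "\<bar>F (z + h) - F z - (\<Sum>u\<in>Basis. (h \<bullet> u) * D u z)\<bar> \<le> n * (\<epsilon>' * norm h)"
      unfolding n_def
    proof (rule linear_approx_by_coordinate_steps)
      fix T :: "'a set" and w :: 'a assume T: "T \<subseteq> Basis" and w: "w \<in> Basis" "w \<notin> T"
      define p where "p = z + (\<Sum>u\<in>T. (h \<bullet> u) *\<^sub>R u)"
      define a where "a = h \<bullet> w"
      have near: "p + t *\<^sub>R w \<in> Q' \<and> dist (p + t *\<^sub>R w) z < d0" if "\<bar>t\<bar> \<le> \<bar>a\<bar>" for t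
      proof -
        have "norm ((\<Sum>u\<in>T. (h \<bullet> u) *\<^sub>R u) + t *\<^sub>R w) < min (e/2) d0"
          using norm_partial_Basis_sum_le[OF T w that[unfolded a_def]] nh unfolding n_def by linarith
        then show ?thesis
          using inQ'[OF z, of "(\<Sum>u\<in>T. (h \<bullet> u) *\<^sub>R u) + t *\<^sub>R w"] unfolding p_def
          by (simp add: dist_norm add.assoc)
      qed
      have "\<bar>F (p + a *\<^sub>R w) - F p - a * D w z\<bar> \<le> \<epsilon>' * \<bar>a\<bar>"
      proof (rule increment_along_direction_le)
        show "((\<lambda>s. F (p + s *\<^sub>R w)) has_real_derivative D w (p + t *\<^sub>R w)) (at t)"
          if "\<bar>t\<bar> \<le> \<bar>a\<bar>" for t
        proof -
          have "((\<lambda>s. F ((p + t *\<^sub>R w) + s *\<^sub>R w)) has_real_derivative D w (p + t *\<^sub>R w)) (at 0)"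
            using der[OF w(1)] near[OF that] Q'S by blast
          then show ?thesis
            using DERIV_shift[of "\<lambda>s. F (p + s *\<^sub>R w)" _ 0 t] by (simp add: algebra_simps scaleR_add_left)
        qed
        show "\<bar>D w (p + t *\<^sub>R w) - D w z\<bar> \<le> \<epsilon>'" if "\<bar>t\<bar> \<le> \<bar>a\<bar>" for t
          using ucont[OF w(1) _ conjunct1[OF near[OF that]] conjunct2[OF near[OF that]]] inQ'[OF z, of 0] e(1)
          by simp
      qed
      also have "\<dots> \<le> \<epsilon>' * norm h"
        unfolding a_def using Basis_le_norm[OF w(1), of h] \<epsilon>' by (simp add: mult_left_mono)
      finally show "\<bar>F (z + (\<Sum>u\<in>T. (h \<bullet> u) *\<^sub>R u) + (h \<bullet> w) *\<^sub>R w) - F (z + (\<Sum>u\<in>T. (h \<bullet> u) *\<^sub>R u))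
          - (h \<bullet> w) * D w z\<bar> \<le> \<epsilon>' * norm h"
        unfolding p_def a_def .
    qed
    then show "\<bar>F (z + h) - F z - (\<Sum>u\<in>Basis. (h \<bullet> u) * D u z)\<bar> \<le> \<epsilon> * norm h"
      using n1 unfolding \<epsilon>'_def by simp
  qed
qed

lemma has_derivative_from_partials:
  fixes F :: "'a::euclidean_space \<Rightarrow> real" and D :: "'a \<Rightarrow> 'a \<Rightarrow> real"
  assumes S: "open S" and z: "z \<in> S"
   and der: "\<And>u z. u \<in> Basis \<Longrightarrow> z \<in> S \<Longrightarrow> ((\<lambda>t. F (z + t *\<^sub>R u)) has_real_derivative D u z) (at 0)"
   and cont: "\<And>u. u \<in> Basis \<Longrightarrow> continuous_on S (D u)"
  shows "(F has_derivative (\<lambda>h. \<Sum>u\<in>Basis. (h \<bullet> u) * D u z)) (at z)"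
  unfolding has_derivative_at_alt
proof (intro conjI allI impI)
  show "bounded_linear (\<lambda>h. \<Sum>u\<in>Basis. (h \<bullet> u) * D u z)"
    by (intro bounded_linear_sum bounded_linear_mult_const bounded_linear_inner_left)
  fix e :: real assume "e > 0"
  from uniform_linear_approx_from_partials[OF S _ _ der cont this, of "{z}"] z obtain d where "d > 0"
    "\<And>h. norm h < d \<Longrightarrow> \<bar>F (z + h) - F z - (\<Sum>u\<in>Basis. (h \<bullet> u) * D u z)\<bar> \<le> e * norm h" by auto
  then show "\<exists>d>0. \<forall>y. norm (y - z) < d \<longrightarrow>
      norm (F y - F z - (\<Sum>u\<in>Basis. ((y - z) \<bullet> u) * D u z)) \<le> e * norm (y - z)"
    by (metis add.commute diff_add_cancel real_norm_def)
qed

lemma has_real_derivative_at_0I: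
  fixes g :: "real \<Rightarrow> real"
  assumes "\<And>\<epsilon>. \<epsilon> > 0 \<Longrightarrow> \<exists>\<delta>>0. \<forall>h. \<bar>h\<bar> < \<delta> \<longrightarrow> \<bar>g h - g 0 - h * D\<bar> \<le> \<epsilon> * \<bar>h\<bar>"
  shows "(g has_real_derivative D) (at 0)"
proof -
  have "(g has_derivative (\<lambda>h. h * D)) (at 0)"
    unfolding has_derivative_at_alt using assms by (auto intro: bounded_linear_mult_left)
  then show ?thesis by (simp add: has_field_derivative_def mult.commute[of _ D])
qed

section \<open>Gronwall inequality\<close>

lemma first_zero_of_positive_start:
  fixes g :: "real \<Rightarrow> real"
  assumes gc: "continuous_on {0..1} g" and g0: "g 0 > 0" and t: "t \<in> {0..1}" "g t \<le> 0"
  obtains ts where "0 < ts" "ts \<le> 1" "g ts = 0" "\<And>s. 0 \<le> s \<Longrightarrow> s < ts \<Longrightarrow> g s > 0"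
proof -
  define Z where "Z = {0..1} \<inter> g -` {..0}"
  have bdd: "bdd_below Z" unfolding Z_def by (rule bdd_belowI[of _ 0]) auto
  have "t \<in> Z" using t unfolding Z_def by auto
  moreover have "closed Z" unfolding Z_def by (intro continuous_closed_preimage gc) auto
  ultimately have "Inf Z \<in> Z" using bdd by (intro closed_contains_Inf) auto
  then have ts: "0 \<le> Inf Z" "Inf Z \<le> 1" "g (Inf Z) \<le> 0" unfolding Z_def by auto
  have before: "g s > 0" if "0 \<le> s" "s < Inf Z" for s
  proof (rule ccontr)
    assume "\<not> g s > 0"
    then have "s \<in> Z" using that ts unfolding Z_def by auto
    then show False using cInf_lower[OF _ bdd] that by force
  qed
  have "continuous_on {0..Inf Z} g" by (rule continuous_on_subset[OF gc]) (use ts in auto)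
  then obtain x where x: "0 \<le> x" "x \<le> Inf Z" "g x = 0"
    using IVT2'[of g "Inf Z" 0 0] ts g0 by auto
  then have "x = Inf Z" using before[of x] by force
  moreover have "Inf Z \<noteq> 0" using ts g0 by auto
  ultimately show ?thesis using ts x before by (intro that[of "Inf Z"]) auto
qed

lemma deriv_le_at_first_touch:
  fixes p q :: "real \<Rightarrow> real"
  assumes "0 < t" "(p has_real_derivative p') (at t)" "(q has_real_derivative q') (at t)"
    "p t = q t" "\<And>s. 0 \<le> s \<Longrightarrow> s < t \<Longrightarrow> p s < q s"
  shows "q' \<le> p'"
proof (rule ccontr)
  assume "\<not> q' \<le> p'"
  moreover have "((\<lambda>s. p s - q s) has_real_derivative p' - q') (at t)"
    using assms(2,3) by (rule DERIV_diff)
  ultimately obtain e where e: "e > 0" "\<And>h. h > 0 \<Longrightarrow> h < e \<Longrightarrow> p t - q t < p (t - h) - q (t - h)"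
    using DERIV_neg_dec_left[of "\<lambda>s. p s - q s" "p' - q'" t] by auto
  define h where "h = min (e/2) (t/2)"
  have "h > 0" "h < e" "t - h \<ge> 0" "t - h < t" using e assms(1) by (auto simp: h_def)
  then show False using e(2)[of h] assms(4) assms(5)[of "t - h"] by auto
qed

lemma gronwall_abs:
  fixes \<psi> \<psi>' :: "real \<Rightarrow> real"
  assumes L: "L > 0" and K: "K \<ge> 0"
    and cont: "continuous_on {0..1} \<psi>" and init: "\<psi> 0 = 0"
    and der: "\<And>t. 0 < t \<Longrightarrow> t \<le> 1 \<Longrightarrow> (\<psi> has_real_derivative \<psi>' t) (at t)"
    and bd: "\<And>t. 0 < t \<Longrightarrow> t \<le> 1 \<Longrightarrow> \<bar>\<psi>' t\<bar> \<le> L * \<bar>\<psi> t\<bar> + K"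
    and t: "0 \<le> t" "t \<le> 1"
  shows "\<bar>\<psi> t\<bar> \<le> K / L * exp (2 * L)"
proof -
  have KL: "K / L \<ge> 0" using K L by simp
  have below: "\<bar>\<psi> t\<bar> < (K / L + \<epsilon>) * exp (2 * L * t) - K / L" if eps: "\<epsilon> > 0" for \<epsilon>
  proof (rule ccontr)
    define m where "m = (\<lambda>t. (K / L + \<epsilon>) * exp (2 * L * t) - K / L)"
    have mder: "(m has_real_derivative 2 * (L * m s + K)) (at s)" for s
      unfolding m_def using L by (auto intro!: derivative_eq_intros simp: field_simps)
    have m_ge: "m s \<ge> \<epsilon>" if "s \<ge> 0" for s
    proof -
      have "(K / L + \<epsilon>) * 1 \<le> (K / L + \<epsilon>) * exp (2 * L * s)"
        using that L KL eps by (intro mult_left_mono) auto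
      then show ?thesis unfolding m_def by simp
    qed
    have gc: "continuous_on {0..1} (\<lambda>s. m s - \<bar>\<psi> s\<bar>)" unfolding m_def by (intro continuous_intros cont)
    have g0: "m 0 - \<bar>\<psi> 0\<bar> > 0" using m_ge[of 0] eps init by simp
    assume "\<not> \<bar>\<psi> t\<bar> < (K / L + \<epsilon>) * exp (2 * L * t) - K / L"
    then have gt: "m t - \<bar>\<psi> t\<bar> \<le> 0" unfolding m_def by simp
    obtain ts where ts: "0 < ts" "ts \<le> 1" "m ts - \<bar>\<psi> ts\<bar> = 0"
      and lt: "\<And>s. 0 \<le> s \<Longrightarrow> s < ts \<Longrightarrow> m s - \<bar>\<psi> s\<bar> > 0"
      by (rule first_zero_of_positive_start[OF gc g0 _ gt]) (use t in auto)
    define \<sigma> :: real where "\<sigma> = (if \<psi> ts \<ge> 0 then 1 else -1)"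
    have \<sigma>: "\<bar>\<sigma>\<bar> = 1" "\<sigma> * \<psi> ts = \<bar>\<psi> ts\<bar>" unfolding \<sigma>_def by auto
    have "2 * (L * m ts + K) \<le> \<sigma> * \<psi>' ts"
    proof (rule deriv_le_at_first_touch[OF ts(1) DERIV_cmult[OF der[OF ts(1,2)]] mder])
      show "\<sigma> * \<psi> ts = m ts" using ts(3) \<sigma> by simp
      show "\<sigma> * \<psi> s < m s" if "0 \<le> s" "s < ts" for s
        using lt[OF that] \<sigma>(1) abs_ge_self[of "\<sigma> * \<psi> s"] by (simp add: abs_mult)
    qed
    also have "\<dots> \<le> L * m ts + K"
      using bd[OF ts(1,2)] ts(3) \<sigma>(1) abs_ge_self[of "\<sigma> * \<psi>' ts"] by (simp add: abs_mult)
    finally have "L * m ts + K \<le> 0" by simp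
    moreover have "L * m ts > 0" using m_ge[of ts] ts(1) L eps by simp
    ultimately show False using K by linarith
  qed
  show ?thesis
  proof (rule field_le_epsilon)
    fix e :: real assume e: "e > 0"
    define \<epsilon> where "\<epsilon> = e / exp (2 * L)"
    have \<epsilon>: "\<epsilon> > 0" using e by (simp add: \<epsilon>_def)
    have "\<bar>\<psi> t\<bar> < (K / L + \<epsilon>) * exp (2 * L * t) - K / L" by (rule below[OF \<epsilon>])
    also have "\<dots> \<le> (K / L + \<epsilon>) * exp (2 * L)"
    proof -
      have "L * t \<le> L" using t L by (simp add: mult_left_le)
      then have "(K / L + \<epsilon>) * exp (2 * L * t) \<le> (K / L + \<epsilon>) * exp (2 * L)"
        using KL \<epsilon> by (intro mult_left_mono) auto
      then show ?thesis using KL by linarith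
    qed
    also have "\<dots> = K / L * exp (2 * L) + e" unfolding \<epsilon>_def by (simp add: field_simps)
    finally show "\<bar>\<psi> t\<bar> \<le> K / L * exp (2 * L) + e" by simp
  qed
qed

section \<open>Picard iteration\<close>

lemma continuous_on_compose_pair:
  fixes G :: "real \<Rightarrow> real \<Rightarrow> real"
  assumes Gc: "continuous_on UNIV (\<lambda>p. G (fst p) (snd p))" and h: "continuous_on S h"
  shows "continuous_on S (\<lambda>s. G s (h s))"
proof -
  have "continuous_on S (\<lambda>s. (s, h s))" by (intro continuous_intros h)
  from continuous_on_compose2[OF Gc this] show ?thesis by simp
qed

lemma integral_exp_mult_0:
  fixes \<Lambda> x :: real assumes "\<Lambda> > 0" "x \<ge> 0"
  shows "integral {0..x} (\<lambda>s. exp (\<Lambda> * s)) = (exp (\<Lambda> * x) - 1) / \<Lambda>"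
proof -
  have "((\<lambda>s. exp (\<Lambda> * s)) has_integral (exp (\<Lambda> * x) / \<Lambda> - exp (\<Lambda> * 0) / \<Lambda>)) {0..x}"
  proof (rule fundamental_theorem_of_calculus[OF assms(2)])
    fix s assume "s \<in> {0..x}"
    have "((\<lambda>s. exp (\<Lambda> * s) / \<Lambda>) has_real_derivative exp (\<Lambda> * s) * \<Lambda> / \<Lambda>) (at s within {0..x})"
      by (auto intro!: derivative_eq_intros)
    then show "((\<lambda>s. exp (\<Lambda> * s) / \<Lambda>) has_vector_derivative exp (\<Lambda> * s)) (at s within {0..x})"
      using assms(1) by (simp add: has_real_derivative_iff_has_vector_derivative)
  qed
  then show ?thesis by (simp add: integral_unique diff_divide_distrib)
qed

lemma has_real_derivative_from_integral_equation:
  fixes G :: "real \<Rightarrow> real \<Rightarrow> real"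
  assumes Gc: "continuous_on UNIV (\<lambda>p. G (fst p) (snd p))" and uc: "continuous_on {0..T} u"
    and ueq: "\<And>t. t \<in> {0..T} \<Longrightarrow> u t = v0 + integral {0..t} (\<lambda>s. G s (u s))"
    and t: "0 < t" "t < T"
  shows "(u has_real_derivative G t (u t)) (at t)"
proof -
  have Gu: "continuous_on {0..T} (\<lambda>s. G s (u s))" by (rule continuous_on_compose_pair[OF Gc uc])
  have "((\<lambda>x. integral {0..x} (\<lambda>s. G s (u s))) has_real_derivative G t (u t)) (at t within {0..T})"
    using integral_has_real_derivative[OF Gu, of t] t by auto
  then have "((\<lambda>x. integral {0..x} (\<lambda>s. G s (u s))) has_real_derivative G t (u t)) (at t)"
    using t by (subst (asm) at_within_interior) auto
  then have "((\<lambda>x. v0 + integral {0..x} (\<lambda>s. G s (u s))) has_real_derivative G t (u t)) (at t)"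
    by (auto intro!: derivative_eq_intros)
  then show ?thesis
    by (rule has_field_derivative_transform_within_open[of _ _ _ "{0<..<T}"]) (use t ueq in auto)
qed

text \<open>With the weight \<open>exp (- \<Lambda> t)\<close>, \<open>\<Lambda> = 2 L + 1\<close>, the Picard operator becomes a contraction
  with constant \<open>1/2\<close> on any interval, not just on short ones.\<close>
lemma weighted_picard_contraction:
  fixes G :: "real \<Rightarrow> real \<Rightarrow> real" and \<phi> \<psi> :: "real \<Rightarrow> real"
  assumes lip: "\<And>t v w. \<bar>G t v - G t w\<bar> \<le> L * \<bar>v - w\<bar>" and L: "L \<ge> 0"
    and \<Lambda>: "\<Lambda> = 2 * L + 1" and x: "x \<ge> 0"
    and int\<phi>: "(\<lambda>s. G s (exp (\<Lambda> * s) * \<phi> s)) integrable_on {0..x}"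
    and int\<psi>: "(\<lambda>s. G s (exp (\<Lambda> * s) * \<psi> s)) integrable_on {0..x}"
    and d: "\<And>s. s \<in> {0..x} \<Longrightarrow> \<bar>\<phi> s - \<psi> s\<bar> \<le> d"
  shows "exp (- \<Lambda> * x) * \<bar>integral {0..x} (\<lambda>s. G s (exp (\<Lambda> * s) * \<phi> s))
      - integral {0..x} (\<lambda>s. G s (exp (\<Lambda> * s) * \<psi> s))\<bar> \<le> d / 2"
proof -
  have \<Lambda>0: "\<Lambda> > 0" and d0: "d \<ge> 0" using L \<Lambda> d[of 0] x by auto
  have pt: "\<bar>G s (exp (\<Lambda> * s) * \<phi> s) - G s (exp (\<Lambda> * s) * \<psi> s)\<bar> \<le> L * d * exp (\<Lambda> * s)"
    if "s \<in> {0..x}" for s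
  proof -
    have "\<bar>G s (exp (\<Lambda> * s) * \<phi> s) - G s (exp (\<Lambda> * s) * \<psi> s)\<bar> \<le> L * (exp (\<Lambda> * s) * \<bar>\<phi> s - \<psi> s\<bar>)"
      using lip[of s "exp (\<Lambda> * s) * \<phi> s" "exp (\<Lambda> * s) * \<psi> s"]
      by (simp add: abs_mult right_diff_distrib[symmetric])
    also have "\<dots> \<le> L * (exp (\<Lambda> * s) * d)"
      using d[OF that] L by (intro mult_left_mono) auto
    finally show ?thesis by (simp add: algebra_simps)
  qed
  have "\<bar>integral {0..x} (\<lambda>s. G s (exp (\<Lambda> * s) * \<phi> s)) - integral {0..x} (\<lambda>s. G s (exp (\<Lambda> * s) * \<psi> s))\<bar>
      \<le> integral {0..x} (\<lambda>s. L * d * exp (\<Lambda> * s))"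
    unfolding integral_diff[OF int\<phi> int\<psi>, symmetric] real_norm_def[symmetric]
    by (rule integral_norm_bound_integral[OF integrable_diff[OF int\<phi> int\<psi>]])
      (auto intro!: integrable_continuous_interval continuous_intros pt)
  also have "\<dots> = L * d * ((exp (\<Lambda> * x) - 1) / \<Lambda>)"
    using integral_exp_mult_0[OF \<Lambda>0 x] by simp
  finally have "exp (- \<Lambda> * x) * \<bar>integral {0..x} (\<lambda>s. G s (exp (\<Lambda> * s) * \<phi> s))
      - integral {0..x} (\<lambda>s. G s (exp (\<Lambda> * s) * \<psi> s))\<bar>
      \<le> exp (- \<Lambda> * x) * (L * d * ((exp (\<Lambda> * x) - 1) / \<Lambda>))"
    by (intro mult_left_mono) auto
  also have "\<dots> = (L / \<Lambda>) * d * (1 - exp (- \<Lambda> * x))"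
    using \<Lambda>0 by (simp add: field_simps exp_minus)
  also have "\<dots> \<le> (L / \<Lambda>) * d"
    using L \<Lambda>0 x d0 by (intro mult_left_le) auto
  also have "\<dots> \<le> d / 2"
    using L d0 unfolding \<Lambda> by (simp add: field_simps mult_right_mono)
  finally show ?thesis .
qed

lemma clamped_weighted_integral_bcontfun:
  fixes g :: "real \<Rightarrow> real"
  assumes gc: "continuous_on UNIV g" and bnd: "\<And>s. \<bar>g s\<bar> \<le> B" and \<Lambda>: "\<Lambda> \<ge> 0"
  shows "(\<lambda>t. exp (- \<Lambda> * max 0 (min 2 t)) * (v0 + integral {0..max 0 (min 2 t)} g)) \<in> bcontfun"
proof (rule bcontfun_normI)
  define c where "c = (\<lambda>t::real. max 0 (min 2 t))"
  have cc: "continuous_on UNIV c" unfolding c_def by (intro continuous_intros)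
  have c02: "c t \<in> {0..2}" for t unfolding c_def by auto
  have "continuous_on {0..2} (\<lambda>x. integral {0..x} g)"
    by (rule indefinite_integral_continuous_1[OF integrable_continuous_interval])
      (rule continuous_on_subset[OF gc], simp)
  then have "continuous_on UNIV (\<lambda>t. integral {0..c t} g)"
    using continuous_on_compose2[OF _ cc, of "{0..2}"] c02 by blast
  then show "continuous_on UNIV (\<lambda>t. exp (- \<Lambda> * max 0 (min 2 t)) * (v0 + integral {0..max 0 (min 2 t)} g))"
    unfolding c_def by (intro continuous_intros continuous_on_compose2[OF continuous_on_exp]) auto
  fix t
  have "norm (integral {0..c t} g) \<le> integral {0..c t} (\<lambda>s. B)"
    by (rule integral_norm_bound_integral)
      (auto intro!: integrable_continuous_interval continuous_on_subset[OF gc] simp: bnd)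
  also have "\<dots> \<le> 2 * B" using c02[of t] bnd[of 0] by (auto intro: mult_right_mono)
  finally have bound: "\<bar>v0 + integral {0..c t} g\<bar> \<le> \<bar>v0\<bar> + 2 * B" by simp
  have "exp (- \<Lambda> * c t) * \<bar>v0 + integral {0..c t} g\<bar> \<le> \<bar>v0 + integral {0..c t} g\<bar>"
    using \<Lambda> c02[of t] by (intro mult_left_le_one_le) auto
  then show "norm (exp (- \<Lambda> * max 0 (min 2 t)) * (v0 + integral {0..max 0 (min 2 t)} g)) \<le> \<bar>v0\<bar> + 2 * B"
    using bound unfolding c_def by (simp add: abs_mult)
qed

lemma picard_existence:
  fixes G :: "real \<Rightarrow> real \<Rightarrow> real"
  assumes Gc: "continuous_on UNIV (\<lambda>p. G (fst p) (snd p))"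
    and lip: "\<And>t v w. \<bar>G t v - G t w\<bar> \<le> L * \<bar>v - w\<bar>" and L: "L \<ge> 0"
    and bnd: "\<And>t w. \<bar>G t w\<bar> \<le> B"
  shows "\<exists>u. u 0 = v0 \<and> continuous_on {0..2} u \<and>
           (\<forall>t. 0 < t \<and> t < 2 \<longrightarrow> (u has_real_derivative G t (u t)) (at t))"
proof -
  define \<Lambda> where "\<Lambda> = 2 * L + 1"
  have \<Lambda>: "\<Lambda> > 0" using L by (auto simp: \<Lambda>_def)
  define c where "c = (\<lambda>t::real. max 0 (min 2 t))"
  have cc: "continuous_on UNIV c" unfolding c_def by (intro continuous_intros)
  have c02: "c t \<in> {0..2}" for t unfolding c_def by auto
  have cid: "t \<in> {0..2} \<Longrightarrow> c t = t" for t unfolding c_def by auto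
  define k where "k = (\<lambda>(\<phi>::real \<Rightarrow>\<^sub>C real) s. G s (exp (\<Lambda> * c s) * \<phi> s))"
  have kc: "continuous_on S (k \<phi>)" for \<phi> S unfolding k_def
    by (intro continuous_on_compose_pair[OF Gc] continuous_intros
        continuous_on_compose2[OF continuous_on_exp] continuous_on_subset[OF cc]) auto
  have kint: "k \<phi> integrable_on {a..b}" for \<phi> a b
    by (rule integrable_continuous_interval[OF kc])
  define P where "P = (\<lambda>\<phi> t. exp (- \<Lambda> * c t) * (v0 + integral {0..c t} (k \<phi>)))"
  have Pb: "P \<phi> \<in> bcontfun" for \<phi>
    unfolding P_def c_def using kc bnd \<Lambda> unfolding k_def
    by (intro clamped_weighted_integral_bcontfun) (auto simp: less_imp_le)
  define T where "T = (\<lambda>\<phi>. Bcontfun (P \<phi>))"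
  have Tap: "apply_bcontfun (T \<phi>) = P \<phi>" for \<phi> unfolding T_def using Pb by (simp add: Bcontfun_inverse)
  have "dist (T \<phi>) (T \<psi>) \<le> 1/2 * dist \<phi> \<psi>" for \<phi> \<psi>
  proof (rule dist_bound)
    fix t
    have "exp (- \<Lambda> * c t) * \<bar>integral {0..c t} (\<lambda>s. G s (exp (\<Lambda> * s) * \<phi> s))
        - integral {0..c t} (\<lambda>s. G s (exp (\<Lambda> * s) * \<psi> s))\<bar> \<le> dist \<phi> \<psi> / 2"
    proof (rule weighted_picard_contraction[OF lip L \<Lambda>_def])
      have k: "k \<theta> s = G s (exp (\<Lambda> * s) * \<theta> s)" if "s \<in> {0..c t}" for s \<theta>
        using that c02[of t] cid[of s] unfolding k_def by auto
      show "(\<lambda>s. G s (exp (\<Lambda> * s) * \<phi> s)) integrable_on {0..c t}"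
        by (rule integrable_eq[OF kint[of \<phi>]]) (rule k)
      show "(\<lambda>s. G s (exp (\<Lambda> * s) * \<psi> s)) integrable_on {0..c t}"
        by (rule integrable_eq[OF kint[of \<psi>]]) (rule k)
      show "\<bar>\<phi> s - \<psi> s\<bar> \<le> dist \<phi> \<psi>" for s using dist_bounded[of \<phi> s \<psi>] by (simp add: dist_real_def)
    qed (use c02 in auto)
    moreover have "integral {0..c t} (k \<theta>) = integral {0..c t} (\<lambda>s. G s (exp (\<Lambda> * s) * \<theta> s))" for \<theta>
      by (rule integral_cong) (use c02[of t] cid in \<open>auto simp: k_def\<close>)
    ultimately show "dist (T \<phi> t) (T \<psi> t) \<le> 1/2 * dist \<phi> \<psi>"
      unfolding Tap P_def dist_real_def by (simp add: abs_mult right_diff_distrib[symmetric])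
  qed
  then obtain \<phi> where fixp: "T \<phi> = \<phi>" using banach_fix_type[of "1/2" T] by auto
  define u where "u = (\<lambda>t. exp (\<Lambda> * c t) * \<phi> t)"
  have uc: "continuous_on S u" for S unfolding u_def
    by (intro continuous_intros continuous_on_compose2[OF continuous_on_exp] continuous_on_subset[OF cc]) auto
  have ueq: "u t = v0 + integral {0..t} (\<lambda>s. G s (u s))" if "t \<in> {0..2}" for t
  proof -
    have "\<phi> t = P \<phi> t" using fixp Tap by metis
    then have "u t = v0 + integral {0..t} (k \<phi>)"
      using cid[OF that] unfolding u_def P_def by (simp add: exp_minus field_simps)
    then show ?thesis unfolding k_def u_def by simp
  qed
  show ?thesis
    using ueq[of 0] uc has_real_derivative_from_integral_equation[OF Gc uc ueq]
    by (intro exI[of _ u]) auto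
qed

section \<open>Barriers from the divergence of the integral of 1/f\<close>

lemma primitive_of_inverse_along_solution:
  fixes u u' m :: "real \<Rightarrow> real"
  assumes uc: "continuous_on {0..1} u"
    and ud: "\<And>s. 0 < s \<Longrightarrow> s < 1 \<Longrightarrow> (u has_real_derivative u' s) (at s)"
    and ub: "\<And>s. 0 < s \<Longrightarrow> s < 1 \<Longrightarrow> \<bar>u' s\<bar> \<le> m (u s)"
    and mc: "continuous_on UNIV m" and mp: "\<And>w. m w > 0"
    and lohi: "\<And>s. 0 \<le> s \<Longrightarrow> s \<le> 1 \<Longrightarrow> lo < u s \<and> u s < hi"
    and t: "0 \<le> t" "t \<le> 1"
  shows "\<bar>integral {lo..u t} (\<lambda>w. 1 / m w) - integral {lo..u 0} (\<lambda>w. 1 / m w)\<bar> \<le> 1"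
proof -
  define g where "g = (\<lambda>w. 1 / m w)"
  define H where "H = (\<lambda>w. integral {lo..w} g)"
  have gc: "continuous_on S g" for S unfolding g_def
    using mp by (intro continuous_intros continuous_on_subset[OF mc]) (auto simp: less_imp_neq[symmetric])
  have Hd: "(H has_real_derivative g w) (at w)" if "lo < w" "w < hi" for w
  proof -
    have "(H has_real_derivative g w) (at w within {lo..hi})"
      unfolding H_def by (rule integral_has_real_derivative[OF gc]) (use that in auto)
    then show ?thesis using that by (subst (asm) at_within_interior) auto
  qed
  have Hc: "continuous_on {lo..hi} H" unfolding H_def
    by (rule indefinite_integral_continuous_1[OF integrable_continuous_interval[OF gc]])
  show ?thesis
  proof (cases "t = 0")
    case True then show ?thesis by simp
  next
    case False
    then have t0: "0 < t" using t by simp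
    have sub: "u ` {0..t} \<subseteq> {lo..hi}"
    proof safe
      fix s assume "s \<in> {0..t}"
      then have "lo < u s \<and> u s < hi" using lohi t by auto
      then show "u s \<in> {lo..hi}" by auto
    qed
    have Huc: "continuous_on {0..t} (\<lambda>s. H (u s))"
      by (rule continuous_on_compose2[OF Hc continuous_on_subset[OF uc] sub]) (use t in auto)
    have Hud: "((\<lambda>s. H (u s)) has_real_derivative g (u s) * u' s) (at s)" if "0 < s" "s < t" for s
      using DERIV_chain2[OF Hd ud] lohi[of s] that t by auto
    from MVT[OF t0 Huc] Hud obtain l z where z: "0 < z" "z < t" "((\<lambda>s. H (u s)) has_real_derivative l) (at z)"
      "H (u t) - H (u 0) = (t - 0) * l" by (metis real_differentiable_def)
    have "l = g (u z) * u' z" using DERIV_unique[OF z(3) Hud[OF z(1,2)]] .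
    moreover have "\<bar>g (u z) * u' z\<bar> \<le> 1"
    proof -
      have "\<bar>u' z\<bar> \<le> m (u z)" using ub z t by auto
      then show ?thesis unfolding g_def using mp[of "u z"] by (simp add: abs_mult field_simps)
    qed
    ultimately have "\<bar>H (u t) - H (u 0)\<bar> \<le> t * 1" using z(4) t
      by (metis abs_mult abs_of_nonneg mult_left_mono diff_zero)
    then show ?thesis using t unfolding H_def g_def by simp
  qed
qed

lemma integral_inverse_crossed_le_one:
  fixes u u' m :: "real \<Rightarrow> real"
  assumes uc: "continuous_on {0..1} u"
    and ud: "\<And>s. 0 < s \<Longrightarrow> s < 1 \<Longrightarrow> (u has_real_derivative u' s) (at s)"
    and ub: "\<And>s. 0 < s \<Longrightarrow> s < 1 \<Longrightarrow> \<bar>u' s\<bar> \<le> m (u s)"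
    and mc: "continuous_on UNIV m" and mp: "\<And>w. m w > 0"
    and t: "0 \<le> t" "t \<le> 1"
  shows "u t \<le> a \<Longrightarrow> a \<le> u 0 \<Longrightarrow> integral {a..u 0} (\<lambda>w. 1 / m w) \<le> 1"
    and "u 0 \<le> a \<Longrightarrow> a \<le> u t \<Longrightarrow> integral {u 0..a} (\<lambda>w. 1 / m w) \<le> 1"
proof -
  define g where "g = (\<lambda>w. 1 / m w)"
  have gc: "continuous_on S g" for S unfolding g_def
    using mp by (intro continuous_intros continuous_on_subset[OF mc]) (auto simp: less_imp_neq[symmetric])
  have gi: "g integrable_on {x..y}" for x y by (rule integrable_continuous_interval[OF gc])
  have gp: "g w \<ge> 0" for w unfolding g_def using mp[of w] by simp
  have "bounded (u ` {0..1})" using compact_continuous_image[OF uc compact_Icc] compact_imp_bounded by blast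
  then obtain R where R: "\<And>s. s \<in> {0..1} \<Longrightarrow> \<bar>u s\<bar> \<le> R"
    unfolding bounded_iff by force
  define lo where "lo = - R - \<bar>a\<bar> - 1"
  define hi where "hi = R + \<bar>a\<bar> + 1"
  have lohi: "lo < u s \<and> u s < hi" if "0 \<le> s" "s \<le> 1" for s
    using R[of s] that unfolding lo_def hi_def by auto
  have alo: "lo < a" unfolding lo_def using R[of 0] by auto
  have core: "\<bar>integral {lo..u t} g - integral {lo..u 0} g\<bar> \<le> 1"
    using primitive_of_inverse_along_solution[OF uc ud ub mc mp lohi t] unfolding g_def by blast
  have comb: "integral {lo..x} g + integral {x..y} g = integral {lo..y} g" if "lo \<le> x" "x \<le> y" for x y
    by (rule Henstock_Kurzweil_Integration.integral_combine[OF that gi])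
  show "u t \<le> a \<Longrightarrow> a \<le> u 0 \<Longrightarrow> integral {a..u 0} (\<lambda>w. 1 / m w) \<le> 1"
  proof -
    assume a: "u t \<le> a" "a \<le> u 0"
    have "integral {u t..a} g \<ge> 0" by (rule integral_nonneg[OF gi]) (use gp in auto)
    moreover have "integral {lo..u t} g + integral {u t..a} g = integral {lo..a} g"
      using comb a lohi t by (meson less_imp_le)
    moreover have "integral {lo..a} g + integral {a..u 0} g = integral {lo..u 0} g"
      using comb a alo by (meson less_imp_le)
    ultimately show ?thesis using core unfolding g_def by linarith
  qed
  show "u 0 \<le> a \<Longrightarrow> a \<le> u t \<Longrightarrow> integral {u 0..a} (\<lambda>w. 1 / m w) \<le> 1"
  proof -
    assume a: "u 0 \<le> a" "a \<le> u t"
    have "integral {a..u t} g \<ge> 0" by (rule integral_nonneg[OF gi]) (use gp in auto)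
    moreover have "integral {lo..u 0} g + integral {u 0..a} g = integral {lo..a} g"
      using comb a lohi[of 0] by (meson less_imp_le order_refl zero_le_one)
    moreover have "integral {lo..a} g + integral {a..u t} g = integral {lo..u t} g"
      using comb a alo by (meson less_imp_le)
    ultimately show ?thesis using core unfolding g_def by linarith
  qed
qed

lemma truncated_inverse_integral_gt_one:
  fixes f :: "real \<Rightarrow> real"
  assumes fi: "(\<lambda>s. 1 / f s) integrable_on {x..y}" and fp: "\<And>s. s \<in> {x..y} \<Longrightarrow> f s > 0"
    and A: "A > 0" and gt: "integral {x..y} (\<lambda>s. 1 / f s) > A"
  obtains k :: nat where "(\<lambda>s. min (1 / (A * f s)) (real k + 1)) integrable_on {x..y}"
    "integral {x..y} (\<lambda>s. min (1 / (A * f s)) (real k + 1)) > 1"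
proof -
  have gi: "(\<lambda>s. 1 / (A * f s)) integrable_on {x..y}"
    using integrable_on_cmult_left[OF fi, of "1/A"] by simp
  have ga: "(\<lambda>s. 1 / (A * f s)) absolutely_integrable_on {x..y}"
    by (rule nonnegative_absolutely_integrable_1[OF gi]) (use fp A in \<open>auto intro: less_imp_le\<close>)
  have ca: "(\<lambda>s. real k + 1) absolutely_integrable_on {x..y}" for k
    by (rule nonnegative_absolutely_integrable_1) auto
  have mi: "(\<lambda>s. min (1 / (A * f s)) (real k + 1)) integrable_on {x..y}" for k
    using absolutely_integrable_min_1[OF ga ca[of k]] by (simp add: absolutely_integrable_on_def)
  have "(\<lambda>k. integral {x..y} (\<lambda>s. min (1 / (A * f s)) (real k + 1))) \<longlonglongrightarrow> integral {x..y} (\<lambda>s. 1 / (A * f s))"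
  proof (rule dominated_convergence(2)[OF mi gi])
    fix k s assume s: "s \<in> {x..y}"
    show "norm (min (1 / (A * f s)) (real k + 1)) \<le> 1 / (A * f s)"
      using fp[OF s] A by (simp add: abs_if)
  next
    fix s assume s: "s \<in> {x..y}"
    obtain N :: nat where "1 / (A * f s) \<le> real N" using real_arch_simple by blast
    then have "\<forall>\<^sub>F k in sequentially. min (1 / (A * f s)) (real k + 1) = 1 / (A * f s)"
      unfolding eventually_sequentially by (intro exI[of _ N]) auto
    then show "(\<lambda>k. min (1 / (A * f s)) (real k + 1)) \<longlonglongrightarrow> 1 / (A * f s)"
      by (rule tendsto_eventually)
  qed
  moreover have "integral {x..y} (\<lambda>s. 1 / (A * f s)) = integral {x..y} (\<lambda>s. 1 / f s) / A"
    using integral_mult_left[of "{x..y}" "\<lambda>s. 1 / f s" "1/A"] fi by (simp add: field_simps)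
  moreover have "integral {x..y} (\<lambda>s. 1 / f s) / A > 1" using gt A by simp
  ultimately have "\<forall>\<^sub>F k in sequentially. integral {x..y} (\<lambda>s. min (1 / (A * f s)) (real k + 1)) > 1"
    using order_tendstoD(1) by fastforce
  then obtain k where "integral {x..y} (\<lambda>s. min (1 / (A * f s)) (real k + 1)) > 1"
    unfolding eventually_sequentially by auto
  then show ?thesis using that mi by blast
qed

text \<open>Since \<open>f\<close> need not be continuous, \<open>u\<close> is compared with the continuous positive majorants
  \<open>max (1 / (k + 1)) h\<close> of \<open>h\<close>, whose reciprocals dominate truncations of \<open>1 / (A f)\<close>.\<close>
lemma solution_stays_between_barriers:
  fixes u u' h f :: "real \<Rightarrow> real"
  assumes uc: "continuous_on {0..1} u"
    and ud: "\<And>s. 0 < s \<Longrightarrow> s < 1 \<Longrightarrow> (u has_real_derivative u' s) (at s)"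
    and ub: "\<And>s. 0 < s \<Longrightarrow> s < 1 \<Longrightarrow> \<bar>u' s\<bar> \<le> h (u s)"
    and hc: "continuous_on UNIV h" and h0: "\<And>w. h w \<ge> 0"
    and hf: "\<And>w. m1 \<le> w \<Longrightarrow> w \<le> m2 \<Longrightarrow> h w \<le> A * f w"
    and fpos: "\<And>w. w > 0 \<Longrightarrow> f w > 0" and fint: "(\<lambda>s. 1 / f s) integrable_on {m1..m2}"
    and A: "A > 0" and m: "0 < m1" "m1 \<le> u 0" "u 0 \<le> m2"
    and I1: "integral {m1..u 0} (\<lambda>s. 1 / f s) > A" and I2: "integral {u 0..m2} (\<lambda>s. 1 / f s) > A"
    and t: "0 \<le> t" "t \<le> 1"
  shows "m1 < u t \<and> u t < m2"
proof -
  define mk where "mk = (\<lambda>(k::nat) w. max (1 / (real k + 1)) (h w))"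
  have mkc: "continuous_on UNIV (mk k)" for k unfolding mk_def by (intro continuous_intros hc)
  have mkp: "mk k w > 0" for k w unfolding mk_def by (simp add: less_max_iff_disj)
  have ubk: "\<bar>u' s\<bar> \<le> mk k (u s)" if "0 < s" "s < 1" for s k
    using ub[OF that] unfolding mk_def by auto
  have cmp: "min (1 / (A * f w)) (real k + 1) \<le> 1 / mk k w" if "m1 \<le> w" "w \<le> m2" for w k
  proof (cases "h w \<le> 1 / (real k + 1)")
    case False
    then have hp: "h w > 0" "mk k w = h w" unfolding mk_def
      by (auto intro: less_le_trans[of 0 "1/(real k + 1)"])
    have "1 / (A * f w) \<le> 1 / h w" using hf[OF that] hp(1) by (simp add: frac_le)
    then show ?thesis using hp(2) by simp
  qed (simp add: mk_def)
  have wide: "\<exists>k. integral {x..y} (\<lambda>w. 1 / mk k w) > 1"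
    if xy: "m1 \<le> x" "y \<le> m2" and gt: "integral {x..y} (\<lambda>s. 1 / f s) > A" for x y
  proof -
    have fi: "(\<lambda>s. 1 / f s) integrable_on {x..y}"
      by (rule integrable_on_subinterval[OF fint]) (use xy in auto)
    have fp: "f s > 0" if "s \<in> {x..y}" for s using that xy m(1) fpos by auto
    obtain k where mi: "(\<lambda>s. min (1 / (A * f s)) (real k + 1)) integrable_on {x..y}"
      and k: "integral {x..y} (\<lambda>s. min (1 / (A * f s)) (real k + 1)) > 1"
      by (rule truncated_inverse_integral_gt_one[OF fi fp A gt])
    have "(\<lambda>w. 1 / mk k w) integrable_on {x..y}"
      using mkp by (intro integrable_continuous_interval continuous_intros continuous_on_subset[OF mkc])
        (auto simp: less_imp_neq[symmetric])
    then have "integral {x..y} (\<lambda>s. min (1 / (A * f s)) (real k + 1)) \<le> integral {x..y} (\<lambda>w. 1 / mk k w)"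
      by (intro integral_le[OF mi]) (use cmp xy in auto)
    then show ?thesis using k by (intro exI[of _ k]) linarith
  qed
  have "m1 < u t"
  proof (rule ccontr)
    assume "\<not> m1 < u t"
    then have "integral {m1..u 0} (\<lambda>w. 1 / mk k w) \<le> 1" for k
      using integral_inverse_crossed_le_one(1)[OF uc ud ubk mkc mkp t _ m(2)] by simp
    moreover obtain k where "integral {m1..u 0} (\<lambda>w. 1 / mk k w) > 1"
      using wide[OF order_refl m(3) I1] by blast
    ultimately show False by (meson not_le)
  qed
  moreover have "u t < m2"
  proof (rule ccontr)
    assume "\<not> u t < m2"
    then have "integral {u 0..m2} (\<lambda>w. 1 / mk k w) \<le> 1" for k
      using integral_inverse_crossed_le_one(2)[OF uc ud ubk mkc mkp t m(3)] by simp
    moreover obtain k where "integral {u 0..m2} (\<lambda>w. 1 / mk k w) > 1"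
      using wide[OF m(2) order_refl I2] by blast
    ultimately show False by (meson not_le)
  qed
  ultimately show ?thesis ..
qed

lemma Fint_diff:
  assumes v0: "v0 > 0" and ab: "0 < a" "a \<le> b"
    and fint: "\<And>x y. 0 < x \<Longrightarrow> x \<le> y \<Longrightarrow> (\<lambda>s. 1 / f s) integrable_on {x..y}"
  shows "Fint f v0 b - Fint f v0 a = integral {a..b} (\<lambda>s. 1 / f s)"
proof -
  have comb: "integral {x..y} (\<lambda>s. 1 / f s) + integral {y..z} (\<lambda>s. 1 / f s) = integral {x..z} (\<lambda>s. 1 / f s)"
    if "0 < x" "x \<le> y" "y \<le> z" for x y z
    using Henstock_Kurzweil_Integration.integral_combine[OF that(2,3) fint[OF that(1), of z]] that by simp
  consider "v0 \<le> a" | "a < v0" "v0 \<le> b" | "b < v0" by linarith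
  then show ?thesis
  proof cases
    case 1 then show ?thesis using comb[of v0 a b] v0 ab unfolding Fint_def by auto
  next
    case 2 then show ?thesis using comb[of a v0 b] v0 ab unfolding Fint_def by auto
  next
    case 3 then show ?thesis using comb[of a b v0] v0 ab unfolding Fint_def by auto
  qed
qed

lemma barrier_levels_exist:
  assumes v0: "v0 > 0" and v: "v > 0"
    and fint: "\<And>x y. 0 < x \<Longrightarrow> x \<le> y \<Longrightarrow> (\<lambda>s. 1 / f s) integrable_on {x..y}"
    and F_top: "filterlim (Fint f v0) at_top at_top"
    and F_bot: "filterlim (Fint f v0) at_bot (at_right 0)"
  obtains m1 m2 where "0 < m1" "m1 \<le> v" "v \<le> m2"
    "integral {m1..v} (\<lambda>s. 1 / f s) > A" "integral {v..m2} (\<lambda>s. 1 / f s) > A"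
proof -
  have "\<forall>\<^sub>F w in at_right 0. Fint f v0 w \<le> Fint f v0 v - A - 1"
    using F_bot unfolding filterlim_at_bot by blast
  then obtain d where d: "d > 0" "\<And>w. 0 < w \<Longrightarrow> w < d \<Longrightarrow> Fint f v0 w \<le> Fint f v0 v - A - 1"
    unfolding eventually_at_right_field by auto
  define m1 where "m1 = min (d/2) v"
  have m1: "0 < m1" "m1 \<le> v" "m1 < d" unfolding m1_def using d v by auto
  have "\<forall>\<^sub>F w in at_top. Fint f v0 w \<ge> Fint f v0 v + A + 1"
    using F_top unfolding filterlim_at_top by blast
  then obtain N where N: "\<And>w. w \<ge> N \<Longrightarrow> Fint f v0 w \<ge> Fint f v0 v + A + 1"
    unfolding eventually_at_top_linorder by auto
  define m2 where "m2 = max N v"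
  have m2: "v \<le> m2" "m2 \<ge> N" unfolding m2_def by auto
  show ?thesis
  proof (rule that[OF m1(1,2) m2(1)])
    show "integral {m1..v} (\<lambda>s. 1 / f s) > A"
      using Fint_diff[OF v0 m1(1,2) fint] d(2)[OF m1(1,3)] by simp
    show "integral {v..m2} (\<lambda>s. 1 / f s) > A"
      using Fint_diff[OF v0 v m2(1) fint] N[OF m2(2)] by simp
  qed
qed

section \<open>The Pfaff system\<close>

lemma bcomp_Pair [simp]: "bcomp b j (x, v) = b x v $ j"
  unfolding bcomp_def by simp

lemma Basis_vec_eq_axis: "(Basis :: (real^'n) set) = range (\<lambda>k. axis k 1)"
  unfolding Basis_vec_def by auto

lemma sum_Basis_vec: "(\<Sum>u\<in>(Basis :: (real^'n) set). f u) = (\<Sum>k\<in>UNIV. f (axis k 1))"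
proof -
  have "inj (\<lambda>k::'n. axis k (1::real))" by (auto intro!: injI simp: axis_eq_axis)
  then show ?thesis unfolding Basis_vec_eq_axis by (simp add: sum.reindex)
qed

lemma sum_Basis_vec_real:
  fixes f :: "(real^'n) \<times> real \<Rightarrow> real"
  shows "(\<Sum>u\<in>Basis. f u) = (\<Sum>k\<in>UNIV. f (axis k 1, 0)) + f (0, 1)"
proof -
  have "(\<Sum>u\<in>Basis. f u) = (\<Sum>u\<in>(\<lambda>u. (u, 0::real)) ` (Basis :: (real^'n) set). f u)
      + (\<Sum>u\<in>Pair (0::real^'n) ` (Basis :: real set). f u)"
    unfolding Basis_prod_def by (rule sum.union_disjoint) auto
  also have "(\<Sum>u\<in>(\<lambda>u. (u, 0::real)) ` (Basis :: (real^'n) set). f u) = (\<Sum>u\<in>(Basis :: (real^'n) set). f (u, 0))"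
    by (rule sum.reindex_cong[where l="\<lambda>u. (u, 0)"]) (auto intro: inj_onI)
  finally show ?thesis by (simp add: sum_Basis_vec)
qed

lemma smooth_on_continuous_on: "smooth_on S h \<Longrightarrow> continuous_on S h"
  unfolding smooth_on_def by (metis empty_subsetI empty_set iter_pd.simps(1))

lemma smooth_on_has_partial:
  "smooth_on S h \<Longrightarrow> u \<in> Basis \<Longrightarrow> z \<in> S \<Longrightarrow>
    ((\<lambda>t. h (z + t *\<^sub>R u)) has_real_derivative dir_deriv h u z) (at 0)"
  unfolding smooth_on_def by (metis empty_subsetI empty_set iter_pd.simps)

lemma smooth_on_partial_continuous_on:
  "smooth_on S h \<Longrightarrow> u \<in> Basis \<Longrightarrow> continuous_on S (dir_deriv h u)"
  unfolding smooth_on_def by (metis empty_subsetI empty_set insert_subset list.simps(15) iter_pd.simps)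

lemma continuous_on_unit_interval_pos_bounds:
  fixes g :: "real \<Rightarrow> real"
  assumes "continuous_on {0..1} g" "\<And>t. t \<in> {0..1} \<Longrightarrow> g t > 0"
  obtains m M where "0 < m" "\<And>t. t \<in> {0..1} \<Longrightarrow> g t \<in> {m..M}"
proof -
  have ne: "{0..1::real} \<noteq> {}" by simp
  obtain t0 where "t0 \<in> {0..1}" "\<forall>t\<in>{0..1}. g t0 \<le> g t"
    using continuous_attains_inf[OF compact_Icc ne assms(1)] by blast
  moreover obtain t1 where "\<forall>t\<in>{0..1}. g t \<le> g t1"
    using continuous_attains_sup[OF compact_Icc ne assms(1)] by blast
  ultimately show ?thesis using that[of "g t0" "g t1"] assms(2) by auto
qed

locale pfaff_system =
  fixes U :: "(real^'n) set" and b :: "real^'n \<Rightarrow> real \<Rightarrow> real^'n"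
  assumes U_open: "open U"
    and b_smooth: "\<And>i. smooth_on (U \<times> {0<..}) (bcomp b i)"
    and b_compat: "\<And>i j x v. x \<in> U \<Longrightarrow> v > 0 \<Longrightarrow>
        pd_x j (bcomp b i) x v + (b x v $ j) * pd_v (bcomp b i) x v
      = pd_x i (bcomp b j) x v + (b x v $ i) * pd_v (bcomp b j) x v"
begin

definition "\<Omega> = U \<times> {0::real<..}"

definition bdiff :: "'n \<Rightarrow> (real^'n) \<times> real \<Rightarrow> (real^'n) \<times> real \<Rightarrow> real" where
  "bdiff j z h = (\<Sum>k\<in>UNIV. fst h $ k * pd_x k (bcomp b j) (fst z) (snd z))
     + snd h * pd_v (bcomp b j) (fst z) (snd z)"

lemma Omega_open: "open \<Omega>"
  unfolding \<Omega>_def by (intro open_Times U_open open_greaterThan)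

lemma b_continuous: "continuous_on \<Omega> (bcomp b j)"
  unfolding \<Omega>_def by (rule smooth_on_continuous_on[OF b_smooth])

lemma b_partial:
  "u \<in> Basis \<Longrightarrow> z \<in> \<Omega> \<Longrightarrow>
    ((\<lambda>t. bcomp b j (z + t *\<^sub>R u)) has_real_derivative dir_deriv (bcomp b j) u z) (at 0)"
  unfolding \<Omega>_def by (rule smooth_on_has_partial[OF b_smooth])

lemma b_partial_continuous: "u \<in> Basis \<Longrightarrow> continuous_on \<Omega> (dir_deriv (bcomp b j) u)"
  unfolding \<Omega>_def by (rule smooth_on_partial_continuous_on[OF b_smooth])

lemma sum_Basis_partials: "(\<Sum>u\<in>Basis. (h \<bullet> u) * dir_deriv (bcomp b j) u z) = bdiff j z h"
  unfolding sum_Basis_vec_real bdiff_def pd_x_def pd_v_def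
  by (cases h; cases z) (simp add: inner_axis)

lemma b_uniform_approx:
  assumes "compact Q" "Q \<subseteq> \<Omega>" "\<epsilon> > 0"
  shows "\<exists>\<delta>>0. \<forall>j. \<forall>z\<in>Q. \<forall>h. norm h < \<delta> \<longrightarrow>
    \<bar>bcomp b j (z + h) - bcomp b j z - bdiff j z h\<bar> \<le> \<epsilon> * norm h"
proof -
  have "\<exists>\<delta>>0. \<forall>j\<in>UNIV. \<forall>z\<in>Q. \<forall>h. norm h < \<delta> \<longrightarrow>
      \<bar>bcomp b j (z + h) - bcomp b j z - bdiff j z h\<bar> \<le> \<epsilon> * norm h"
  proof (rule finite_ex_pos_common)
    fix j
    show "\<exists>\<delta>>0. \<forall>z\<in>Q. \<forall>h. norm h < \<delta> \<longrightarrow> \<bar>bcomp b j (z + h) - bcomp b j z - bdiff j z h\<bar> \<le> \<epsilon> * norm h"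
      using uniform_linear_approx_from_partials[OF Omega_open assms(1,2) b_partial b_partial_continuous assms(3)]
      unfolding sum_Basis_partials by blast
  qed auto
  then show ?thesis by blast
qed

lemma b_has_derivative:
  assumes "z \<in> \<Omega>"
  shows "(bcomp b j has_derivative bdiff j z) (at z)"
  using has_derivative_from_partials[OF Omega_open assms b_partial b_partial_continuous]
  unfolding sum_Basis_partials by (simp add: fun_eq_iff[symmetric])

lemma b_chain:
  assumes "(\<gamma> has_vector_derivative g') (at t)" "\<gamma> t \<in> \<Omega>"
  shows "((\<lambda>s. bcomp b j (\<gamma> s)) has_real_derivative bdiff j (\<gamma> t) g') (at t)"
proof -
  have "((\<lambda>s. bcomp b j (\<gamma> s)) has_derivative (\<lambda>s. bdiff j (\<gamma> t) (s *\<^sub>R g'))) (at t)"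
    using diff_chain_at[OF assms(1)[unfolded has_vector_derivative_def] b_has_derivative[OF assms(2)]]
    by (simp add: o_def)
  moreover have "bdiff j (\<gamma> t) (s *\<^sub>R g') = s * bdiff j (\<gamma> t) g'" for s
    unfolding bdiff_def by (simp add: sum_distrib_left algebra_simps)
  ultimately show ?thesis by (simp add: has_field_derivative_def mult.commute[of _ "bdiff j (\<gamma> t) g'"])
qed

lemma b_uniformly_continuous:
  assumes "compact Q" "Q \<subseteq> \<Omega>" "\<epsilon> > 0"
  shows "\<exists>d>0. \<forall>j. \<forall>z\<in>Q. \<forall>z'\<in>Q. dist z' z < d \<longrightarrow> \<bar>bcomp b j z' - bcomp b j z\<bar> < \<epsilon>"
  using uniformly_continuous_finite_family[OF assms(1), of UNIV "\<lambda>j. bcomp b j"]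
    continuous_on_subset[OF b_continuous assms(2)] assms(3) by auto

lemma b_bounded:
  assumes "compact Q" "Q \<subseteq> \<Omega>"
  shows "\<exists>B\<ge>0. \<forall>z\<in>Q. \<forall>j. \<bar>bcomp b j z\<bar> \<le> B"
  using compact_bound_finite_family[OF assms(1), of UNIV "\<lambda>j. bcomp b j"]
    continuous_on_subset[OF b_continuous assms(2)] by auto

lemma partials_bounded:
  assumes "compact Q" "Q \<subseteq> \<Omega>"
  shows "\<exists>B\<ge>0. \<forall>z\<in>Q. \<forall>j k. \<bar>pd_x k (bcomp b j) (fst z) (snd z)\<bar> \<le> B \<and> \<bar>pd_v (bcomp b j) (fst z) (snd z)\<bar> \<le> B"
proof -
  have "\<exists>B\<ge>0. \<forall>z\<in>Q. \<forall>(j, u)\<in>UNIV \<times> Basis. \<bar>dir_deriv (bcomp b j) u z\<bar> \<le> B"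
    using compact_bound_finite_family[OF assms(1), of "UNIV \<times> Basis" "\<lambda>(j, u). dir_deriv (bcomp b j) u"]
      continuous_on_subset[OF b_partial_continuous assms(2)]
    by fastforce
  moreover have "(axis k 1, 0) \<in> (Basis :: ((real^'n) \<times> real) set)" "(0, 1) \<in> (Basis :: ((real^'n) \<times> real) set)" for k
    by (auto simp: Basis_prod_def Basis_vec_eq_axis)
  ultimately show ?thesis unfolding pd_x_def pd_v_def by fastforce
qed

lemma b_has_derivative_v:
  assumes "x \<in> U" "s > 0"
  shows "((\<lambda>w. b x w $ j) has_real_derivative pd_v (bcomp b j) x s) (at s)"
proof -
  have "(0::real^'n, 1::real) \<in> Basis" by (simp add: Basis_prod_def)
  from b_partial[OF this, of "(x, s)" j] assms
  have "((\<lambda>t. b x (t + s) $ j) has_real_derivative pd_v (bcomp b j) x s) (at 0)"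
    by (simp add: pd_v_def add.commute \<Omega>_def)
  then show ?thesis using DERIV_shift[of "\<lambda>w. b x w $ j" _ 0 s] by simp
qed

lemma b_lipschitz_v:
  assumes "compact Kx" "Kx \<subseteq> U" "0 < m1"
  shows "\<exists>L\<ge>0. \<forall>x\<in>Kx. \<forall>w\<in>{m1..m2}. \<forall>w'\<in>{m1..m2}. \<forall>j. \<bar>b x w $ j - b x w' $ j\<bar> \<le> L * \<bar>w - w'\<bar>"
proof -
  have Q: "compact (Kx \<times> {m1..m2})" "Kx \<times> {m1..m2} \<subseteq> \<Omega>"
    using assms by (auto simp: \<Omega>_def intro!: compact_Times)
  obtain B where B: "B \<ge> 0" "\<And>z j. z \<in> Kx \<times> {m1..m2} \<Longrightarrow> \<bar>pd_v (bcomp b j) (fst z) (snd z)\<bar> \<le> B"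
    using partials_bounded[OF Q] by blast
  have main: "\<bar>b x w $ j - b x w' $ j\<bar> \<le> B * \<bar>w - w'\<bar>"
    if x: "x \<in> Kx" and w: "w \<in> {m1..m2}" "w' \<in> {m1..m2}" and lt: "w' < w" for x w w' j
  proof -
    have "\<And>s. w' \<le> s \<Longrightarrow> s \<le> w \<Longrightarrow> ((\<lambda>w. b x w $ j) has_real_derivative pd_v (bcomp b j) x s) (at s)"
      using b_has_derivative_v x w assms(2,3) by force
    from MVT2[OF lt this] obtain s where s: "w' < s" "s < w"
      "b x w $ j - b x w' $ j = (w - w') * pd_v (bcomp b j) x s"
      by blast
    have "\<bar>pd_v (bcomp b j) x s\<bar> \<le> B" using B(2)[of "(x, s)" j] x s w by auto
    then show ?thesis using s lt by (simp add: abs_mult mult.commute mult_right_mono)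
  qed
  show ?thesis
  proof (intro exI[of _ B] conjI ballI allI B(1))
    fix x w w' j assume "x \<in> Kx" "w \<in> {m1..m2}" "w' \<in> {m1..m2}"
    then show "\<bar>b x w $ j - b x w' $ j\<bar> \<le> B * \<bar>w - w'\<bar>"
      using main[of x w w' j] main[of x w' w j] by (cases "w' < w"; cases "w < w'") (auto simp: abs_minus_commute)
  qed
qed

lemma solves_pfaff_subset: "solves_pfaff b N V \<Longrightarrow> N' \<subseteq> N \<Longrightarrow> solves_pfaff b N' V"
  unfolding solves_pfaff_def by (auto intro: continuous_on_subset)

lemma solves_pfaff_has_derivative:
  assumes sol: "solves_pfaff b N V" and N: "open N" "N \<subseteq> U" and p: "p \<in> N"
  shows "(V has_derivative (\<lambda>h. h \<bullet> b p (V p))) (at p)"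
proof -
  have Vc: "continuous_on N V" and Vp: "\<And>x. x \<in> N \<Longrightarrow> V x > 0"
    and Vd: "\<And>x i. x \<in> N \<Longrightarrow> ((\<lambda>t. V (x + t *\<^sub>R axis i 1)) has_real_derivative b x (V x) $ i) (at 0)"
    using sol unfolding solves_pfaff_def by auto
  have "(V has_derivative (\<lambda>h. \<Sum>u\<in>Basis. (h \<bullet> u) * (b p (V p) \<bullet> u))) (at p)"
  proof (rule has_derivative_from_partials[OF N(1) p])
    fix u z :: "real^'n" assume u: "u \<in> Basis" and z: "z \<in> N"
    then obtain i where ui: "u = axis i 1" unfolding Basis_vec_eq_axis by auto
    show "((\<lambda>t. V (z + t *\<^sub>R u)) has_real_derivative b z (V z) \<bullet> u) (at 0)"
      using Vd[OF z, of i] unfolding ui by (simp add: inner_axis)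
  next
    fix u :: "real^'n" assume u: "u \<in> Basis"
    then obtain i where ui: "u = axis i 1" unfolding Basis_vec_eq_axis by auto
    have "continuous_on N (\<lambda>z. bcomp b i (z, V z))"
      by (rule continuous_on_compose2[OF b_continuous])
        (use Vc Vp N in \<open>auto intro!: continuous_intros simp: \<Omega>_def\<close>)
    then show "continuous_on N (\<lambda>z. b z (V z) \<bullet> u)" unfolding ui by (simp add: inner_axis)
  qed
  moreover have "(\<lambda>h. \<Sum>u\<in>Basis. (h \<bullet> u) * (b p (V p) \<bullet> u)) = (\<lambda>h. h \<bullet> b p (V p))"
    by (rule ext) (simp add: euclidean_inner[symmetric])
  ultimately show ?thesis by simp
qed

lemma solves_pfaff_along_segment:
  assumes sol: "solves_pfaff b N V" and N: "open N" "N \<subseteq> U" and p: "a + s *\<^sub>R (x - a) \<in> N"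
  shows "((\<lambda>\<tau>. V (a + \<tau> *\<^sub>R (x - a))) has_real_derivative
      (x - a) \<bullet> b (a + s *\<^sub>R (x - a)) (V (a + s *\<^sub>R (x - a)))) (at s)"
proof -
  have "((\<lambda>\<tau>. a + \<tau> *\<^sub>R (x - a)) has_derivative (\<lambda>h. h *\<^sub>R (x - a))) (at s)"
    by (auto intro!: derivative_eq_intros)
  from diff_chain_at[OF this solves_pfaff_has_derivative[OF sol N p]]
  have "((\<lambda>\<tau>. V (a + \<tau> *\<^sub>R (x - a))) has_derivative
      (\<lambda>h. (h *\<^sub>R (x - a)) \<bullet> b (a + s *\<^sub>R (x - a)) (V (a + s *\<^sub>R (x - a))))) (at s)"
    by (simp add: o_def)
  then show ?thesis by (rule has_derivative_imp_has_field_derivative) simp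
qed

lemma solves_pfaff_unique:
  assumes s1: "solves_pfaff b N V1" and s2: "solves_pfaff b N V2"
    and N: "open N" "convex N" "N \<subseteq> U" and a: "a \<in> N" and x: "x \<in> N" and eq: "V1 a = V2 a"
  shows "V1 x = V2 x"
proof -
  define \<sigma> where "\<sigma> = (\<lambda>\<tau>::real. a + \<tau> *\<^sub>R (x - a))"
  have \<sigma>N: "\<sigma> \<tau> \<in> N" if "\<tau> \<in> {0..1}" for \<tau>
  proof -
    have "(1 - \<tau>) *\<^sub>R a + \<tau> *\<^sub>R x \<in> N" using N(2) a x that unfolding convex_alt by auto
    then show ?thesis unfolding \<sigma>_def by (simp add: algebra_simps)
  qed
  have along: "continuous_on {0..1} (\<lambda>\<tau>. V (\<sigma> \<tau>)) \<and> (\<forall>\<tau>\<in>{0..1}. V (\<sigma> \<tau>) > 0)"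
    if "solves_pfaff b N V" for V
    using that \<sigma>N unfolding solves_pfaff_def \<sigma>_def
    by (auto intro!: continuous_on_compose2[of N V] continuous_intros)
  obtain m1 M1 where m1: "0 < m1" "\<And>\<tau>. \<tau> \<in> {0..1} \<Longrightarrow> V1 (\<sigma> \<tau>) \<in> {m1..M1}"
    using continuous_on_unit_interval_pos_bounds along[OF s1] by metis
  obtain m2 M2 where m2: "0 < m2" "\<And>\<tau>. \<tau> \<in> {0..1} \<Longrightarrow> V2 (\<sigma> \<tau>) \<in> {m2..M2}"
    using continuous_on_unit_interval_pos_bounds along[OF s2] by metis
  have Kx: "compact (\<sigma> ` {0..1})" "\<sigma> ` {0..1} \<subseteq> U"
    using \<sigma>N N(3) unfolding \<sigma>_def by (auto intro!: compact_continuous_image continuous_intros)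
  obtain Lv where Lv: "Lv \<ge> 0" "\<forall>y\<in>\<sigma> ` {0..1}. \<forall>w\<in>{min m1 m2..max M1 M2}.
      \<forall>w'\<in>{min m1 m2..max M1 M2}. \<forall>j. \<bar>b y w $ j - b y w' $ j\<bar> \<le> Lv * \<bar>w - w'\<bar>"
    using b_lipschitz_v[OF Kx, of "min m1 m2" "max M1 M2"] m1(1) m2(1) by auto
  define L where "L = Lv * (\<Sum>j\<in>UNIV. \<bar>(x - a) $ j\<bar>) + 1"
  have L: "L > 0" unfolding L_def using Lv(1) by (simp add: add_nonneg_pos sum_nonneg)
  define \<psi> where "\<psi> = (\<lambda>\<tau>. V1 (\<sigma> \<tau>) - V2 (\<sigma> \<tau>))"
  have "\<bar>\<psi> 1\<bar> \<le> 0 / L * exp (2 * L)"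
  proof (rule gronwall_abs[OF L order_refl, where \<psi>=\<psi> and t=1
      and \<psi>'="\<lambda>s. (x - a) \<bullet> (b (\<sigma> s) (V1 (\<sigma> s)) - b (\<sigma> s) (V2 (\<sigma> s)))"])
    show "continuous_on {0..1} \<psi>" unfolding \<psi>_def using along[OF s1] along[OF s2] by (intro continuous_intros) auto
    show "\<psi> 0 = 0" unfolding \<psi>_def \<sigma>_def using eq by simp
    show "(\<psi> has_real_derivative (x - a) \<bullet> (b (\<sigma> s) (V1 (\<sigma> s)) - b (\<sigma> s) (V2 (\<sigma> s)))) (at s)"
      if "0 < s" "s \<le> 1" for s
      unfolding \<psi>_def inner_diff_right using that \<sigma>N[of s] unfolding \<sigma>_def
      by (intro DERIV_diff solves_pfaff_along_segment[OF s1 N(1,3)] solves_pfaff_along_segment[OF s2 N(1,3)]) auto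
    show "\<bar>(x - a) \<bullet> (b (\<sigma> s) (V1 (\<sigma> s)) - b (\<sigma> s) (V2 (\<sigma> s)))\<bar> \<le> L * \<bar>\<psi> s\<bar> + 0"
      if "0 < s" "s \<le> 1" for s
    proof -
      have "\<sigma> s \<in> \<sigma> ` {0..1}" "V1 (\<sigma> s) \<in> {min m1 m2..max M1 M2}" "V2 (\<sigma> s) \<in> {min m1 m2..max M1 M2}"
        using that m1(2)[of s] m2(2)[of s] by auto
      then have "\<bar>b (\<sigma> s) (V1 (\<sigma> s)) $ j - b (\<sigma> s) (V2 (\<sigma> s)) $ j\<bar> \<le> Lv * \<bar>\<psi> s\<bar>" for j
        unfolding \<psi>_def using Lv(2) by blast
      then have "\<bar>\<Sum>j\<in>UNIV. (b (\<sigma> s) (V1 (\<sigma> s)) $ j - b (\<sigma> s) (V2 (\<sigma> s)) $ j) * (x - a) $ j\<bar>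
          \<le> (Lv * \<bar>\<psi> s\<bar>) * (\<Sum>j\<in>UNIV. \<bar>(x - a) $ j\<bar>)"
        by (rule abs_sum_mult_le)
      then show ?thesis unfolding L_def inner_vec_def
        by (simp add: algebra_simps)
    qed
  qed auto
  then show ?thesis unfolding \<psi>_def \<sigma>_def by simp
qed

end

section \<open>Solutions along rays\<close>

definition ray_field :: "(real^'n \<Rightarrow> real \<Rightarrow> real^'n) \<Rightarrow> real^'n \<Rightarrow> real^'n \<Rightarrow> real \<Rightarrow> real \<Rightarrow> real"
  where "ray_field b c y t w = b (c + t *\<^sub>R y) w \<bullet> y"

lemma ray_field_eq_sum: "ray_field b c y t w = (\<Sum>j\<in>UNIV. bcomp b j (c + t *\<^sub>R y, w) * y $ j)"
  unfolding ray_field_def inner_vec_def by (simp add: mult.commute)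

lemma sum_abs_vec_le_of_norm_le:
  "norm (y::real^'n) \<le> r \<Longrightarrow> (\<Sum>j\<in>UNIV. \<bar>y $ j\<bar>) \<le> real CARD('n) * r"
  using sum_abs_vec_le_card_norm[of y] mult_left_mono[of "norm y" r "real CARD('n)"] by linarith

text \<open>The compatibility condition enters only here. With \<open>B j = b\<^sub>j\<close>, \<open>X j k = \<partial>\<^sub>k b\<^sub>j\<close> and
  \<open>W j = \<partial>\<^sub>v b\<^sub>j\<close> at one point, it reads \<open>X i j + B j W i = X j i + B i W j\<close>.\<close>
lemma compatibility_identity:
  fixes X :: "'n::finite \<Rightarrow> 'n \<Rightarrow> real" and B B' W y :: "'n \<Rightarrow> real"
  assumes compat: "\<And>j. X i j + B j * W i = X j i + B i * W j"
  shows "(\<Sum>j\<in>UNIV. B' j * y j) + h * B' i - (\<Sum>j\<in>UNIV. B j * y j)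
      - h * (B i + s * ((\<Sum>k\<in>UNIV. y k * X i k) + (\<Sum>j\<in>UNIV. B j * y j) * W i))
    = (\<delta> - h * s * B i) * (\<Sum>j\<in>UNIV. W j * y j)
      + (\<Sum>j\<in>UNIV. (B' j - B j - (s * h * X j i + \<delta> * W j)) * y j) + h * (B' i - B i)"
proof -
  have "y j * X i j + B j * y j * W i = X j i * y j + B i * (W j * y j)" for j
  proof -
    have "y j * (X i j + B j * W i) = y j * (X j i + B i * W j)" using compat[of j] by simp
    then show ?thesis by (simp add: algebra_simps)
  qed
  then have "(\<Sum>j\<in>UNIV. y j * X i j + B j * y j * W i) = (\<Sum>j\<in>UNIV. X j i * y j + B i * (W j * y j))"
    by (intro sum.cong) auto
  then have eq1: "(\<Sum>k\<in>UNIV. y k * X i k) + (\<Sum>j\<in>UNIV. B j * y j) * W i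
      = (\<Sum>j\<in>UNIV. X j i * y j) + B i * (\<Sum>j\<in>UNIV. W j * y j)"
    by (simp only: sum.distrib sum_distrib_left sum_distrib_right)
  have eq2: "(\<Sum>j\<in>UNIV. (B' j - B j - (s * h * X j i + \<delta> * W j)) * y j)
      = (\<Sum>j\<in>UNIV. B' j * y j) - (\<Sum>j\<in>UNIV. B j * y j) - s * h * (\<Sum>j\<in>UNIV. X j i * y j)
        - \<delta> * (\<Sum>j\<in>UNIV. W j * y j)"
    by (simp add: algebra_simps sum_subtractf sum.distrib sum_distrib_left)
  show ?thesis unfolding eq2 using eq1 by algebra
qed

lemma sum_axis_mult: "(\<Sum>k\<in>UNIV. (axis i 1 :: real^'n) $ k * f k) = f i"
  by (simp add: axis_def if_distrib[of "\<lambda>a. a * _"] cong: if_cong)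

lemma norm_ray_increment_le:
  fixes y :: "real^'n"
  assumes "0 \<le> s" "s \<le> 1"
  shows "norm ((c + s *\<^sub>R (y + h *\<^sub>R axis i 1), w') - (c + s *\<^sub>R y, w)) \<le> \<bar>h\<bar> + \<bar>w' - w\<bar>"
proof -
  have "norm ((c + s *\<^sub>R (y + h *\<^sub>R axis i 1), w') - (c + s *\<^sub>R y, w))
      \<le> norm ((s * h) *\<^sub>R (axis i 1 :: real^'n)) + norm (w' - w)"
    using norm_Pair_le[of "(s * h) *\<^sub>R (axis i 1 :: real^'n)" "w' - w"] by (simp add: algebra_simps)
  also have "\<dots> \<le> \<bar>h\<bar> + \<bar>w' - w\<bar>" using assms by (simp add: abs_mult mult_left_le_one_le)
  finally show ?thesis .
qed

text \<open>\<open>\<phi> t y\<close> solves the ordinary differential equation \<open>d\<phi>/dt = b (c + t y) \<phi> \<bullet> y\<close> along the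
  ray from \<open>c\<close> in direction \<open>y\<close>; the candidate solution of the Pfaff system is \<open>x \<mapsto> \<phi> 1 (x - c)\<close>.\<close>
locale ray_family = pfaff_system U b for U :: "(real^'n) set" and b +
  fixes K :: "(real^'n) set" and c :: "real^'n" and \<rho> m1 m2 v :: real
    and \<phi> :: "real \<Rightarrow> real^'n \<Rightarrow> real"
  assumes K_compact: "compact K" and K_sub: "K \<subseteq> U" and cball_sub: "cball c \<rho> \<subseteq> K"
    and rho: "\<rho> > 0" and m1: "0 < m1"
    and init: "\<And>y. y \<in> ball 0 \<rho> \<Longrightarrow> \<phi> 0 y = v"
    and cont: "\<And>y. y \<in> ball 0 \<rho> \<Longrightarrow> continuous_on {0..1} (\<lambda>t. \<phi> t y)"
    and deriv: "\<And>y t. y \<in> ball 0 \<rho> \<Longrightarrow> 0 < t \<Longrightarrow> t \<le> 1 \<Longrightarrow>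
       ((\<lambda>t. \<phi> t y) has_real_derivative ray_field b c y t (\<phi> t y)) (at t)"
    and range: "\<And>y t. y \<in> ball 0 \<rho> \<Longrightarrow> 0 \<le> t \<Longrightarrow> t \<le> 1 \<Longrightarrow> \<phi> t y \<in> {m1..m2}"
begin

definition "Q = K \<times> {m1..m2}"

lemma Q_compact: "compact Q"
  unfolding Q_def by (intro compact_Times K_compact compact_Icc)

lemma Q_sub: "Q \<subseteq> \<Omega>"
  unfolding Q_def \<Omega>_def using K_sub m1 by auto

lemma ray_in_Q:
  assumes "y \<in> ball 0 \<rho>" "0 \<le> t" "t \<le> 1" "w \<in> {m1..m2}"
  shows "(c + t *\<^sub>R y, w) \<in> Q"
proof -
  have "norm (t *\<^sub>R y) \<le> \<rho>" using assms mult_mono[of t 1 "norm y" \<rho>] by auto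
  then show ?thesis using cball_sub assms(4) unfolding Q_def by (auto simp: dist_norm)
qed

lemma sum_abs_direction_le:
  fixes y :: "real^'n"
  assumes "y \<in> ball 0 \<rho>" shows "(\<Sum>j\<in>UNIV. \<bar>y $ j\<bar>) \<le> real CARD('n) * \<rho>"
  using assms sum_abs_vec_le_of_norm_le[of y \<rho>] by simp

lemma ray_field_difference_bound:
  assumes y: "y \<in> ball 0 \<rho>" and y': "y' \<in> ball 0 \<rho>"
    and Bb: "Bb \<ge> 0" "\<And>z j. z \<in> Q \<Longrightarrow> \<bar>bcomp b j z\<bar> \<le> Bb"
    and Lv: "Lv \<ge> 0" "\<And>x w w' j. x \<in> K \<Longrightarrow> w \<in> {m1..m2} \<Longrightarrow> w' \<in> {m1..m2} \<Longrightarrow>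
      \<bar>b x w $ j - b x w' $ j\<bar> \<le> Lv * \<bar>w - w'\<bar>"
    and \<epsilon>: "\<epsilon> \<ge> 0" "\<And>j z z'. z \<in> Q \<Longrightarrow> z' \<in> Q \<Longrightarrow> dist z' z \<le> norm (y' - y) \<Longrightarrow>
      \<bar>bcomp b j z' - bcomp b j z\<bar> \<le> \<epsilon>"
    and s: "0 \<le> s" "s \<le> 1"
  shows "\<bar>ray_field b c y' s (\<phi> s y') - ray_field b c y s (\<phi> s y)\<bar>
    \<le> (real CARD('n) * \<rho> * Lv + 1) * \<bar>\<phi> s y' - \<phi> s y\<bar> + real CARD('n) * (\<rho> * \<epsilon> + Bb * norm (y' - y))"
proof -
  define n where "n = real CARD('n)"
  define z' where "z' = (c + s *\<^sub>R y', \<phi> s y')"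
  define z'' where "z'' = (c + s *\<^sub>R y', \<phi> s y)"
  define z where "z = (c + s *\<^sub>R y, \<phi> s y)"
  have zQ: "z' \<in> Q" "z'' \<in> Q" "z \<in> Q" unfolding z'_def z''_def z_def
    using ray_in_Q range y y' s by auto
  have "ray_field b c y' s (\<phi> s y') - ray_field b c y s (\<phi> s y)
      = (\<Sum>j\<in>UNIV. (bcomp b j z' - bcomp b j z'') * y' $ j)
      + (\<Sum>j\<in>UNIV. (bcomp b j z'' - bcomp b j z) * y' $ j)
      + (\<Sum>j\<in>UNIV. bcomp b j z * (y' $ j - y $ j))"
    unfolding ray_field_eq_sum z'_def z''_def z_def
    by (simp add: sum_subtractf[symmetric] sum.distrib[symmetric] algebra_simps)
  moreover have "\<bar>\<Sum>j\<in>UNIV. (bcomp b j z' - bcomp b j z'') * y' $ j\<bar> \<le> (Lv * \<bar>\<phi> s y' - \<phi> s y\<bar>) * (n * \<rho>)"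
  proof -
    have "\<bar>bcomp b j z' - bcomp b j z''\<bar> \<le> Lv * \<bar>\<phi> s y' - \<phi> s y\<bar>" for j
      using zQ unfolding z'_def z''_def Q_def by (auto intro: Lv(2))
    then have "\<bar>\<Sum>j\<in>UNIV. (bcomp b j z' - bcomp b j z'') * y' $ j\<bar>
        \<le> (Lv * \<bar>\<phi> s y' - \<phi> s y\<bar>) * (\<Sum>j\<in>UNIV. \<bar>y' $ j\<bar>)"
      by (rule abs_sum_mult_le)
    also have "\<dots> \<le> (Lv * \<bar>\<phi> s y' - \<phi> s y\<bar>) * (n * \<rho>)"
      using sum_abs_direction_le[OF y'] Lv(1) unfolding n_def by (intro mult_left_mono) auto
    finally show ?thesis .
  qed
  moreover have "\<bar>\<Sum>j\<in>UNIV. (bcomp b j z'' - bcomp b j z) * y' $ j\<bar> \<le> \<epsilon> * (n * \<rho>)"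
  proof -
    have "dist z'' z = norm (s *\<^sub>R (y' - y))"
      unfolding z''_def z_def by (simp add: dist_Pair_Pair dist_norm algebra_simps)
    also have "\<dots> \<le> norm (y' - y)" using s mult_left_le_one_le[of "norm (y' - y)" s] by simp
    finally have "\<bar>bcomp b j z'' - bcomp b j z\<bar> \<le> \<epsilon>" for j using \<epsilon>(2)[OF zQ(3,2)] by simp
    then have "\<bar>\<Sum>j\<in>UNIV. (bcomp b j z'' - bcomp b j z) * y' $ j\<bar> \<le> \<epsilon> * (\<Sum>j\<in>UNIV. \<bar>y' $ j\<bar>)"
      by (rule abs_sum_mult_le)
    also have "\<dots> \<le> \<epsilon> * (n * \<rho>)" using sum_abs_direction_le[OF y'] \<epsilon>(1) unfolding n_def by (intro mult_left_mono) auto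
    finally show ?thesis .
  qed
  moreover have "\<bar>\<Sum>j\<in>UNIV. bcomp b j z * (y' $ j - y $ j)\<bar> \<le> Bb * (n * norm (y' - y))"
  proof -
    have "\<bar>\<Sum>j\<in>UNIV. bcomp b j z * (y' $ j - y $ j)\<bar> \<le> Bb * (\<Sum>j\<in>UNIV. \<bar>y' $ j - y $ j\<bar>)"
      by (rule abs_sum_mult_le) (use Bb zQ in auto)
    also have "\<dots> \<le> Bb * (n * norm (y' - y))"
      using sum_abs_vec_le_card_norm[of "y' - y"] Bb(1) unfolding n_def by (intro mult_left_mono) auto
    finally show ?thesis .
  qed
  ultimately have "\<bar>ray_field b c y' s (\<phi> s y') - ray_field b c y s (\<phi> s y)\<bar>
      \<le> (Lv * \<bar>\<phi> s y' - \<phi> s y\<bar>) * (n * \<rho>) + \<epsilon> * (n * \<rho>) + Bb * (n * norm (y' - y))"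
    by linarith
  also have "\<dots> \<le> (n * \<rho> * Lv + 1) * \<bar>\<phi> s y' - \<phi> s y\<bar> + n * (\<rho> * \<epsilon> + Bb * norm (y' - y))"
    by (simp add: algebra_simps)
  finally show ?thesis unfolding n_def .
qed

lemma ray_solution_difference_bound:
  assumes y: "y \<in> ball 0 \<rho>" and y': "y' \<in> ball 0 \<rho>"
    and Bb: "Bb \<ge> 0" "\<And>z j. z \<in> Q \<Longrightarrow> \<bar>bcomp b j z\<bar> \<le> Bb"
    and Lv: "Lv \<ge> 0" "\<And>x w w' j. x \<in> K \<Longrightarrow> w \<in> {m1..m2} \<Longrightarrow> w' \<in> {m1..m2} \<Longrightarrow>
      \<bar>b x w $ j - b x w' $ j\<bar> \<le> Lv * \<bar>w - w'\<bar>"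
    and \<epsilon>: "\<epsilon> \<ge> 0" "\<And>j z z'. z \<in> Q \<Longrightarrow> z' \<in> Q \<Longrightarrow> dist z' z \<le> norm (y' - y) \<Longrightarrow>
      \<bar>bcomp b j z' - bcomp b j z\<bar> \<le> \<epsilon>"
    and t: "t \<in> {0..1}"
  shows "\<bar>\<phi> t y' - \<phi> t y\<bar> \<le> real CARD('n) * (\<rho> * \<epsilon> + Bb * norm (y' - y))
    / (real CARD('n) * \<rho> * Lv + 1) * exp (2 * (real CARD('n) * \<rho> * Lv + 1))"
proof (rule gronwall_abs[where \<psi>="\<lambda>t. \<phi> t y' - \<phi> t y" and t=t
    and \<psi>'="\<lambda>t. ray_field b c y' t (\<phi> t y') - ray_field b c y t (\<phi> t y)"])
  show "real CARD('n) * \<rho> * Lv + 1 > 0" using rho Lv(1) by (simp add: add_nonneg_pos)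
  show "real CARD('n) * (\<rho> * \<epsilon> + Bb * norm (y' - y)) \<ge> 0" using rho \<epsilon>(1) Bb(1) by simp
  show "continuous_on {0..1} (\<lambda>t. \<phi> t y' - \<phi> t y)" by (intro continuous_intros cont y y')
  show "\<phi> 0 y' - \<phi> 0 y = 0" using init y y' by simp
  show "((\<lambda>t. \<phi> t y' - \<phi> t y) has_real_derivative
      ray_field b c y' s (\<phi> s y') - ray_field b c y s (\<phi> s y)) (at s)" if "0 < s" "s \<le> 1" for s
    by (intro DERIV_diff deriv y y' that)
  show "\<bar>ray_field b c y' s (\<phi> s y') - ray_field b c y s (\<phi> s y)\<bar>
      \<le> (real CARD('n) * \<rho> * Lv + 1) * \<bar>\<phi> s y' - \<phi> s y\<bar> + real CARD('n) * (\<rho> * \<epsilon> + Bb * norm (y' - y))"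
    if "0 < s" "s \<le> 1" for s
    using ray_field_difference_bound[OF y y' Bb Lv \<epsilon>] that by simp
qed (use t in auto)

lemma ray_solution_uniformly_close:
  assumes y: "y \<in> ball 0 \<rho>" and \<eta>: "\<eta> > 0"
  shows "\<exists>d>0. \<forall>y'\<in>ball 0 \<rho>. norm (y' - y) < d \<longrightarrow> (\<forall>t\<in>{0..1}. \<bar>\<phi> t y' - \<phi> t y\<bar> \<le> \<eta>)"
proof -
  define n where "n = real CARD('n)"
  have n: "n \<ge> 1" unfolding n_def by (simp add: Suc_leI)
  obtain Bb where Bb: "Bb \<ge> 0" "\<And>z j. z \<in> Q \<Longrightarrow> \<bar>bcomp b j z\<bar> \<le> Bb"
    using b_bounded[OF Q_compact Q_sub] by blast
  obtain Lv where Lv: "Lv \<ge> 0" "\<forall>x\<in>K. \<forall>w\<in>{m1..m2}. \<forall>w'\<in>{m1..m2}. \<forall>j. \<bar>b x w $ j - b x w' $ j\<bar> \<le> Lv * \<bar>w - w'\<bar>"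
    using b_lipschitz_v[OF K_compact K_sub m1, of m2] by blast
  define L where "L = n * \<rho> * Lv + 1"
  have L: "L > 0" unfolding L_def using rho Lv(1) n by (simp add: add_nonneg_pos)
  define E where "E = exp (2 * L) / L"
  have E: "E > 0" unfolding E_def using L by simp
  define \<epsilon> where "\<epsilon> = \<eta> / (2 * E * n * \<rho>)"
  have \<epsilon>: "\<epsilon> > 0" unfolding \<epsilon>_def using \<eta> E n rho by simp
  obtain dU where dU: "dU > 0" "\<And>j z z'. z \<in> Q \<Longrightarrow> z' \<in> Q \<Longrightarrow> dist z' z < dU \<Longrightarrow> \<bar>bcomp b j z' - bcomp b j z\<bar> < \<epsilon>"
    using b_uniformly_continuous[OF Q_compact Q_sub \<epsilon>] by blast
  define d where "d = min dU (\<eta> / (2 * E * n * (Bb + 1)))"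
  have d: "d > 0" unfolding d_def using dU \<eta> E n Bb by simp
  show ?thesis
  proof (intro exI[of _ d] conjI d ballI impI)
    fix y' and t :: real assume y': "y' \<in> ball 0 \<rho>" and yy: "norm (y' - y) < d" and t: "t \<in> {0..1}"
    have "\<bar>\<phi> t y' - \<phi> t y\<bar> \<le> n * (\<rho> * \<epsilon> + Bb * norm (y' - y)) / L * exp (2 * L)"
      unfolding n_def L_def
    proof (rule ray_solution_difference_bound[OF y y' Bb Lv(1)])
      fix j z z' assume z: "z \<in> Q" "z' \<in> Q" "dist z' z \<le> norm (y' - y)"
      then have "dist z' z < dU" using yy unfolding d_def by linarith
      then show "\<bar>bcomp b j z' - bcomp b j z\<bar> \<le> \<epsilon>" using dU(2)[OF z(1,2)] by (simp add: less_imp_le)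
    qed (use Lv(2) \<epsilon> t in auto)
    also have "\<dots> = E * (n * \<rho> * \<epsilon>) + E * (n * Bb * norm (y' - y))"
      unfolding E_def using L by (simp add: field_simps)
    also have "E * (n * \<rho> * \<epsilon>) = \<eta> / 2" unfolding \<epsilon>_def using E n rho by (simp add: field_simps)
    also have "E * (n * Bb * norm (y' - y)) \<le> \<eta> / 2"
    proof -
      have "E * (n * Bb * norm (y' - y)) \<le> E * (n * (Bb + 1) * norm (y' - y))"
        using E n by (intro mult_left_mono) (auto simp: distrib_left distrib_right)
      also have "\<dots> \<le> E * (n * (Bb + 1) * (\<eta> / (2 * E * n * (Bb + 1))))"
        using yy E n Bb unfolding d_def by (intro mult_left_mono) auto
      also have "\<dots> = \<eta> / 2"
      proof -
        have "E * n * (Bb + 1) \<noteq> 0" using E n Bb by simp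
        then show ?thesis by (simp add: field_simps)
      qed
      finally show ?thesis .
    qed
    finally show "\<bar>\<phi> t y' - \<phi> t y\<bar> \<le> \<eta>" by simp
  qed
qed

lemma ray_b_continuous:
  "y \<in> ball 0 \<rho> \<Longrightarrow> continuous_on {0..1} (\<lambda>t. bcomp b j (c + t *\<^sub>R y, \<phi> t y))"
  by (rule continuous_on_compose2[OF continuous_on_subset[OF b_continuous Q_sub]])
    (auto intro!: continuous_intros cont ray_in_Q range)

text \<open>\<open>variation y h i\<close> compares \<open>\<phi> t (y + h e\<^sub>i) - \<phi> t y\<close> with its expected first-order term
  \<open>h t b\<^sub>i(c + t y, \<phi> t y)\<close>; \<open>variation_deriv\<close> is its derivative in \<open>t\<close>.\<close>
definition variation :: "real^'n \<Rightarrow> real \<Rightarrow> 'n \<Rightarrow> real \<Rightarrow> real" where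
  "variation y h i t = \<phi> t (y + h *\<^sub>R axis i 1) - \<phi> t y - h * t * bcomp b i (c + t *\<^sub>R y, \<phi> t y)"

definition variation_deriv :: "real^'n \<Rightarrow> real \<Rightarrow> 'n \<Rightarrow> real \<Rightarrow> real" where
  "variation_deriv y h i t = ray_field b c (y + h *\<^sub>R axis i 1) t (\<phi> t (y + h *\<^sub>R axis i 1))
     - ray_field b c y t (\<phi> t y)
     - h * (bcomp b i (c + t *\<^sub>R y, \<phi> t y)
            + t * bdiff i (c + t *\<^sub>R y, \<phi> t y) (y, ray_field b c y t (\<phi> t y)))"

lemma variation_has_derivative:
  assumes y: "y \<in> ball 0 \<rho>" and y': "y + h *\<^sub>R axis i 1 \<in> ball 0 \<rho>" and s: "0 < s" "s \<le> 1"
  shows "(variation y h i has_real_derivative variation_deriv y h i s) (at s)"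
proof -
  define \<gamma> where "\<gamma> = (\<lambda>t. (c + t *\<^sub>R y, \<phi> t y))"
  have gd: "(\<gamma> has_vector_derivative (y, ray_field b c y s (\<phi> s y))) (at s)"
    unfolding \<gamma>_def using deriv[OF y s]
    by (auto intro!: derivative_eq_intros simp: has_real_derivative_iff_has_vector_derivative)
  have "\<gamma> s \<in> \<Omega>" using ray_in_Q[OF y _ s(2) range[OF y]] s Q_sub unfolding \<gamma>_def by auto
  from DERIV_cmult[OF DERIV_mult[OF DERIV_ident b_chain[OF gd this]], where c=h]
  have "((\<lambda>t. h * (t * bcomp b i (\<gamma> t))) has_real_derivative
      h * (bcomp b i (\<gamma> s) + s * bdiff i (\<gamma> s) (y, ray_field b c y s (\<phi> s y)))) (at s)"
    by (simp add: mult.commute)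
  from DERIV_diff[OF DERIV_diff[OF deriv[OF y' s] deriv[OF y s]] this]
  show ?thesis unfolding variation_def[abs_def] variation_deriv_def \<gamma>_def by (simp add: mult.assoc)
qed

lemma variation_deriv_decomposition:
  fixes y :: "real^'n" and i :: 'n and s h :: real
  defines "y' \<equiv> y + h *\<^sub>R axis i 1"
  defines "z \<equiv> (c + s *\<^sub>R y, \<phi> s y)" and "z' \<equiv> (c + s *\<^sub>R y', \<phi> s y')"
  assumes y: "y \<in> ball 0 \<rho>" and s: "0 \<le> s" "s \<le> 1"
  shows "variation_deriv y h i s
    = variation y h i s * (\<Sum>j\<in>UNIV. pd_v (bcomp b j) (fst z) (snd z) * y $ j)
      + (\<Sum>j\<in>UNIV. (bcomp b j z' - bcomp b j z - bdiff j z (z' - z)) * y $ j)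
      + h * (bcomp b i z' - bcomp b i z)"
proof -
  define \<delta>\<phi> where "\<delta>\<phi> = \<phi> s y' - \<phi> s y"
  define B where "B = (\<lambda>j. bcomp b j z)"
  define B' where "B' = (\<lambda>j. bcomp b j z')"
  define X where "X = (\<lambda>j k. pd_x k (bcomp b j) (fst z) (snd z))"
  define W where "W = (\<lambda>j. pd_v (bcomp b j) (fst z) (snd z))"
  have zQ: "z \<in> Q" unfolding z_def using ray_in_Q[OF y s range[OF y s]] .
  have compat: "X i j + B j * W i = X j i + B i * W j" for j
    using b_compat[of "fst z" "snd z" i j] zQ Q_sub unfolding X_def W_def B_def \<Omega>_def
    by (cases z) auto
  have "z' - z = ((s * h) *\<^sub>R axis i 1, \<delta>\<phi>)"
    unfolding z'_def z_def y'_def \<delta>\<phi>_def by (simp add: algebra_simps)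
  then have R: "bdiff j z (z' - z) = s * h * X j i + \<delta>\<phi> * W j" for j
    unfolding bdiff_def X_def W_def
    using sum_axis_mult[of i "\<lambda>k. s * h * pd_x k (bcomp b j) (fst z) (snd z)"] by (simp add: ac_simps)
  have "(\<Sum>j\<in>UNIV. B' j * y' $ j) = (\<Sum>j\<in>UNIV. B' j * y $ j) + h * (\<Sum>j\<in>UNIV. (axis i 1 :: real^'n) $ j * B' j)"
    unfolding y'_def by (simp add: algebra_simps sum.distrib sum_distrib_left)
  then have "ray_field b c y' s (\<phi> s y') = (\<Sum>j\<in>UNIV. B' j * y $ j) + h * B' i"
    unfolding ray_field_eq_sum B'_def z'_def sum_axis_mult .
  moreover have "ray_field b c y s (\<phi> s y) = (\<Sum>j\<in>UNIV. B j * y $ j)"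
    unfolding ray_field_eq_sum B_def z_def ..
  moreover have "bdiff i z (y, S) = (\<Sum>k\<in>UNIV. y $ k * X i k) + S * W i" for S
    unfolding bdiff_def X_def W_def by simp
  moreover have "variation y h i s = \<delta>\<phi> - h * s * B i"
    unfolding variation_def \<delta>\<phi>_def B_def z_def y'_def by simp
  ultimately show ?thesis
    unfolding variation_deriv_def R y'_def[symmetric] z_def[symmetric] B_def[symmetric]
      W_def[symmetric] B'_def[symmetric]
    using compatibility_identity[where X=X and i=i and B=B and W=W and B'=B' and y="\<lambda>j. y $ j"
        and h=h and s=s and \<delta>=\<delta>\<phi>, OF compat] by (simp add: B_def B'_def W_def)
qed

lemma variation_derivative_bound:
  fixes y :: "real^'n" and i :: 'n and s h \<epsilon> Bb BD :: real
  defines "y' \<equiv> y + h *\<^sub>R axis i 1"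
  defines "z \<equiv> (c + s *\<^sub>R y, \<phi> s y)" and "z' \<equiv> (c + s *\<^sub>R y', \<phi> s y')"
  assumes y: "y \<in> ball 0 \<rho>" and s: "0 \<le> s" "s \<le> 1" and \<epsilon>: "0 < \<epsilon>" "\<epsilon> \<le> 1"
    and Bb: "Bb \<ge> 0" "\<And>z j. z \<in> Q \<Longrightarrow> \<bar>bcomp b j z\<bar> \<le> Bb"
    and BD: "BD \<ge> 0" "\<And>z j. z \<in> Q \<Longrightarrow> \<bar>pd_v (bcomp b j) (fst z) (snd z)\<bar> \<le> BD"
    and taylor: "\<And>j. \<bar>bcomp b j z' - bcomp b j z - bdiff j z (z' - z)\<bar> \<le> \<epsilon> * norm (z' - z)"
    and near: "\<bar>bcomp b i z' - bcomp b i z\<bar> \<le> \<epsilon>"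
  shows "\<bar>variation_deriv y h i s\<bar> \<le> (real CARD('n) * \<rho> * (BD + 1) + 1) * \<bar>variation y h i s\<bar>
    + \<epsilon> * \<bar>h\<bar> * (real CARD('n) * \<rho> * (1 + Bb) + 1)"
proof -
  define n where "n = real CARD('n)"
  have n: "n \<ge> 1" unfolding n_def by (simp add: Suc_leI)
  define P where "P = \<bar>variation y h i s\<bar>"
  define W where "W = (\<lambda>j. pd_v (bcomp b j) (fst z) (snd z))"
  define R where "R = (\<lambda>j. bcomp b j z' - bcomp b j z - bdiff j z (z' - z))"
  have zQ: "z \<in> Q" unfolding z_def using ray_in_Q[OF y s range[OF y s]] .
  have yS: "(\<Sum>j\<in>UNIV. \<bar>y $ j\<bar>) \<le> n * \<rho>" unfolding n_def by (rule sum_abs_direction_le[OF y])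
  have "\<bar>\<Sum>j\<in>UNIV. W j * y $ j\<bar> \<le> BD * (\<Sum>j\<in>UNIV. \<bar>y $ j\<bar>)"
    using BD(2)[OF zQ] unfolding W_def by (intro abs_sum_mult_le)
  also have "\<dots> \<le> BD * (n * \<rho>)" by (rule mult_left_mono[OF yS BD(1)])
  finally have a1: "\<bar>variation y h i s * (\<Sum>j\<in>UNIV. W j * y $ j)\<bar> \<le> P * (BD * (n * \<rho>))"
    unfolding P_def by (simp add: abs_mult mult_left_mono)
  have "\<bar>\<Sum>j\<in>UNIV. R j * y $ j\<bar> \<le> (\<epsilon> * norm (z' - z)) * (\<Sum>j\<in>UNIV. \<bar>y $ j\<bar>)"
    using taylor unfolding R_def by (rule abs_sum_mult_le)
  also have "\<dots> \<le> (\<epsilon> * norm (z' - z)) * (n * \<rho>)" using \<epsilon>(1) by (intro mult_left_mono[OF yS]) simp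
  finally have a2: "\<bar>\<Sum>j\<in>UNIV. R j * y $ j\<bar> \<le> (\<epsilon> * norm (z' - z)) * (n * \<rho>)" .
  have a3: "\<bar>h * (bcomp b i z' - bcomp b i z)\<bar> \<le> \<bar>h\<bar> * \<epsilon>"
    using near by (simp add: abs_mult mult_left_mono)
  have "\<bar>s * bcomp b i z\<bar> \<le> Bb"
    using s Bb(2)[OF zQ, of i] mult_left_le_one_le[of "\<bar>bcomp b i z\<bar>" s] by (simp add: abs_mult)
  then have "\<bar>h * s * bcomp b i z\<bar> \<le> \<bar>h\<bar> * Bb" by (simp add: abs_mult mult.assoc mult_left_mono)
  moreover have "variation y h i s = \<phi> s y' - \<phi> s y - h * s * bcomp b i z"
    unfolding variation_def z_def y'_def by simp
  moreover have "norm (z' - z) \<le> \<bar>h\<bar> + \<bar>\<phi> s y' - \<phi> s y\<bar>"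
    unfolding z'_def z_def y'_def by (rule norm_ray_increment_le[OF s])
  ultimately have "norm (z' - z) \<le> \<bar>h\<bar> + P + \<bar>h\<bar> * Bb" unfolding P_def by linarith
  then have "(\<epsilon> * norm (z' - z)) * (n * \<rho>) \<le> \<epsilon> * (\<bar>h\<bar> + P + \<bar>h\<bar> * Bb) * (n * \<rho>)"
    using \<epsilon>(1) n rho by (intro mult_right_mono mult_left_mono) auto
  also have "\<dots> = \<epsilon> * P * (n * \<rho>) + \<epsilon> * \<bar>h\<bar> * (n * \<rho> * (1 + Bb))"
    by (simp add: algebra_simps)
  finally have a2': "(\<epsilon> * norm (z' - z)) * (n * \<rho>) \<le> \<epsilon> * P * (n * \<rho>) + \<epsilon> * \<bar>h\<bar> * (n * \<rho> * (1 + Bb))" .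
  have "\<epsilon> * (n * \<rho>) \<le> 1 * (n * \<rho>)" using \<epsilon>(2) n rho by (intro mult_right_mono) auto
  then have "BD * (n * \<rho>) + \<epsilon> * (n * \<rho>) \<le> n * \<rho> * (BD + 1) + 1"
    by (simp add: algebra_simps)
  then have "P * (BD * (n * \<rho>) + \<epsilon> * (n * \<rho>)) \<le> P * (n * \<rho> * (BD + 1) + 1)"
    unfolding P_def by (rule mult_left_mono) simp
  then have a1': "P * (BD * (n * \<rho>)) + \<epsilon> * P * (n * \<rho>) \<le> (n * \<rho> * (BD + 1) + 1) * P"
    by (simp add: algebra_simps)
  have split: "\<epsilon> * \<bar>h\<bar> * (n * \<rho> * (1 + Bb) + 1) = \<epsilon> * \<bar>h\<bar> * (n * \<rho> * (1 + Bb)) + \<bar>h\<bar> * \<epsilon>"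
    by (simp add: algebra_simps)
  have "\<bar>variation_deriv y h i s\<bar> \<le> \<bar>variation y h i s * (\<Sum>j\<in>UNIV. W j * y $ j)\<bar>
      + \<bar>\<Sum>j\<in>UNIV. R j * y $ j\<bar> + \<bar>h * (bcomp b i z' - bcomp b i z)\<bar>"
  proof -
    have "variation_deriv y h i s = variation y h i s * (\<Sum>j\<in>UNIV. W j * y $ j)
        + (\<Sum>j\<in>UNIV. R j * y $ j) + h * (bcomp b i z' - bcomp b i z)"
      unfolding W_def R_def z_def z'_def y'_def by (rule variation_deriv_decomposition[OF y s])
    then show ?thesis
      using abs_triangle_ineq[of "variation y h i s * (\<Sum>j\<in>UNIV. W j * y $ j) + (\<Sum>j\<in>UNIV. R j * y $ j)"
          "h * (bcomp b i z' - bcomp b i z)"]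
        abs_triangle_ineq[of "variation y h i s * (\<Sum>j\<in>UNIV. W j * y $ j)" "\<Sum>j\<in>UNIV. R j * y $ j"]
      by linarith
  qed
  then show ?thesis unfolding n_def[symmetric] P_def[symmetric] split using a1 a2 a3 a1' a2' by linarith
qed

lemma variation_bound:
  fixes y :: "real^'n" and i :: 'n and h \<epsilon> \<eta> dT dU Bb BD :: real
  defines "y' \<equiv> y + h *\<^sub>R axis i 1"
  assumes y: "y \<in> ball 0 \<rho>" and y': "y' \<in> ball 0 \<rho>" and \<epsilon>: "0 < \<epsilon>" "\<epsilon> \<le> 1"
    and Bb: "Bb \<ge> 0" "\<And>z j. z \<in> Q \<Longrightarrow> \<bar>bcomp b j z\<bar> \<le> Bb"
    and BD: "BD \<ge> 0" "\<And>z j. z \<in> Q \<Longrightarrow> \<bar>pd_v (bcomp b j) (fst z) (snd z)\<bar> \<le> BD"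
    and taylor: "\<And>j z \<Delta>. z \<in> Q \<Longrightarrow> norm \<Delta> < dT \<Longrightarrow>
      \<bar>bcomp b j (z + \<Delta>) - bcomp b j z - bdiff j z \<Delta>\<bar> \<le> \<epsilon> * norm \<Delta>"
    and ucont: "\<And>j z z'. z \<in> Q \<Longrightarrow> z' \<in> Q \<Longrightarrow> dist z' z < dU \<Longrightarrow> \<bar>bcomp b j z' - bcomp b j z\<bar> < \<epsilon>"
    and close: "\<And>t. t \<in> {0..1} \<Longrightarrow> \<bar>\<phi> t y' - \<phi> t y\<bar> \<le> \<eta>"
    and small: "\<bar>h\<bar> + \<eta> < min dT dU"
  shows "\<bar>variation y h i 1\<bar> \<le> \<epsilon> * \<bar>h\<bar> * (real CARD('n) * \<rho> * (1 + Bb) + 1)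
    / (real CARD('n) * \<rho> * (BD + 1) + 1) * exp (2 * (real CARD('n) * \<rho> * (BD + 1) + 1))"
proof (rule gronwall_abs[where \<psi>="variation y h i" and \<psi>'="variation_deriv y h i" and t=1])
  show "real CARD('n) * \<rho> * (BD + 1) + 1 > 0" using rho BD(1) by (simp add: add_nonneg_pos)
  show "\<epsilon> * \<bar>h\<bar> * (real CARD('n) * \<rho> * (1 + Bb) + 1) \<ge> 0" using \<epsilon> Bb(1) rho by simp
  show "continuous_on {0..1} (variation y h i)"
    unfolding variation_def[abs_def] using ray_b_continuous[OF y] y y'
    by (intro continuous_intros cont) (auto simp: y'_def)
  show "variation y h i 0 = 0" unfolding variation_def using init y y' by (simp add: y'_def)
  show "(variation y h i has_real_derivative variation_deriv y h i s) (at s)" if "0 < s" "s \<le> 1" for s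
    using variation_has_derivative[OF y y'[unfolded y'_def] that] .
  show "\<bar>variation_deriv y h i s\<bar> \<le> (real CARD('n) * \<rho> * (BD + 1) + 1) * \<bar>variation y h i s\<bar>
      + \<epsilon> * \<bar>h\<bar> * (real CARD('n) * \<rho> * (1 + Bb) + 1)" if s: "0 < s" "s \<le> 1" for s
  proof (rule variation_derivative_bound[OF y _ _ \<epsilon> Bb BD])
    define z where "z = (c + s *\<^sub>R y, \<phi> s y)"
    define z' where "z' = (c + s *\<^sub>R (y + h *\<^sub>R axis i 1), \<phi> s (y + h *\<^sub>R axis i 1))"
    have zQ: "z \<in> Q" "z' \<in> Q" unfolding z_def z'_def using ray_in_Q range y y'[unfolded y'_def] s by auto
    have "norm (z' - z) \<le> \<bar>h\<bar> + \<bar>\<phi> s y' - \<phi> s y\<bar>"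
      unfolding z'_def z_def y'_def by (rule norm_ray_increment_le) (use s in auto)
    then have "norm (z' - z) < dT" "norm (z' - z) < dU" using close[of s] s small by auto
    then show "\<bar>bcomp b j z' - bcomp b j z - bdiff j z (z' - z)\<bar> \<le> \<epsilon> * norm (z' - z)"
      "\<bar>bcomp b i z' - bcomp b i z\<bar> \<le> \<epsilon>" for j
      using taylor[OF zQ(1), of "z' - z" j] ucont[OF zQ, of i] by (auto simp: dist_norm)
  qed (use s in auto)
qed auto

lemma ray_solution_has_partial:
  assumes y: "y \<in> ball 0 \<rho>"
  shows "((\<lambda>h. \<phi> 1 (y + h *\<^sub>R axis i 1)) has_real_derivative bcomp b i (c + y, \<phi> 1 y)) (at 0)"
proof (rule has_real_derivative_at_0I)
  fix \<epsilon>0 :: real assume \<epsilon>0: "\<epsilon>0 > 0"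
  obtain Bb where Bb: "Bb \<ge> 0" "\<And>z j. z \<in> Q \<Longrightarrow> \<bar>bcomp b j z\<bar> \<le> Bb"
    using b_bounded[OF Q_compact Q_sub] by blast
  obtain BD where BD: "BD \<ge> 0" "\<And>z j. z \<in> Q \<Longrightarrow> \<bar>pd_v (bcomp b j) (fst z) (snd z)\<bar> \<le> BD"
    using partials_bounded[OF Q_compact Q_sub] by blast
  define L where "L = real CARD('n) * \<rho> * (BD + 1) + 1"
  define C where "C = (real CARD('n) * \<rho> * (1 + Bb) + 1) / L * exp (2 * L)"
  have C: "C > 0" unfolding C_def L_def using rho Bb(1) BD(1) by (simp add: add_nonneg_pos)
  define \<epsilon> where "\<epsilon> = min 1 (\<epsilon>0 / C)"
  have \<epsilon>: "\<epsilon> > 0" "\<epsilon> \<le> 1" "\<epsilon> * C \<le> \<epsilon>0" unfolding \<epsilon>_def using \<epsilon>0 C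
    by (auto simp: min_def field_simps)
  obtain dT where dT: "dT > 0" "\<And>j z h. z \<in> Q \<Longrightarrow> norm h < dT \<Longrightarrow>
      \<bar>bcomp b j (z + h) - bcomp b j z - bdiff j z h\<bar> \<le> \<epsilon> * norm h"
    using b_uniform_approx[OF Q_compact Q_sub \<epsilon>(1)] by blast
  obtain dU where dU: "dU > 0" "\<And>j z z'. z \<in> Q \<Longrightarrow> z' \<in> Q \<Longrightarrow> dist z' z < dU \<Longrightarrow>
      \<bar>bcomp b j z' - bcomp b j z\<bar> < \<epsilon>"
    using b_uniformly_continuous[OF Q_compact Q_sub \<epsilon>(1)] by blast
  define \<eta> where "\<eta> = min dT dU / 2"
  have \<eta>: "\<eta> > 0" unfolding \<eta>_def using dT dU by simp
  obtain dC where dC: "dC > 0" "\<And>y'. y' \<in> ball 0 \<rho> \<Longrightarrow> norm (y' - y) < dC \<Longrightarrow>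
      (\<forall>t\<in>{0..1}. \<bar>\<phi> t y' - \<phi> t y\<bar> \<le> \<eta>)"
    using ray_solution_uniformly_close[OF y \<eta>] by blast
  define \<delta> where "\<delta> = min (min dC \<eta>) (\<rho> - norm y)"
  have \<delta>: "\<delta> > 0" unfolding \<delta>_def using dC \<eta> y by simp
  show "\<exists>\<delta>>0. \<forall>h. \<bar>h\<bar> < \<delta> \<longrightarrow> \<bar>\<phi> 1 (y + h *\<^sub>R axis i 1) - \<phi> 1 (y + 0 *\<^sub>R axis i 1)
      - h * bcomp b i (c + y, \<phi> 1 y)\<bar> \<le> \<epsilon>0 * \<bar>h\<bar>"
  proof (intro exI[of _ \<delta>] conjI \<delta> allI impI)
    fix h :: real assume h: "\<bar>h\<bar> < \<delta>"
    have y': "y + h *\<^sub>R axis i 1 \<in> ball 0 \<rho>"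
      using norm_triangle_ineq[of y "h *\<^sub>R axis i 1"] h unfolding \<delta>_def by simp
    have "\<bar>variation y h i 1\<bar> \<le> \<epsilon> * \<bar>h\<bar> * C"
    proof -
      have "\<bar>h\<bar> + \<eta> < min dT dU" using h unfolding \<delta>_def \<eta>_def by auto
      moreover have "\<bar>\<phi> t (y + h *\<^sub>R axis i 1) - \<phi> t y\<bar> \<le> \<eta>" if "t \<in> {0..1}" for t
        using dC(2)[OF y'] h that unfolding \<delta>_def by simp
      ultimately show ?thesis
        using variation_bound[where \<eta>=\<eta> and dT=dT and dU=dU, OF y y' \<epsilon>(1,2) Bb BD dT(2) dU(2)]
        unfolding C_def L_def by (simp add: mult.assoc)
    qed
    also have "\<dots> = (\<epsilon> * C) * \<bar>h\<bar>" by simp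
    also have "\<dots> \<le> \<epsilon>0 * \<bar>h\<bar>" using \<epsilon>(3) by (rule mult_right_mono) simp
    finally show "\<bar>\<phi> 1 (y + h *\<^sub>R axis i 1) - \<phi> 1 (y + 0 *\<^sub>R axis i 1)
        - h * bcomp b i (c + y, \<phi> 1 y)\<bar> \<le> \<epsilon>0 * \<bar>h\<bar>"
      unfolding variation_def by simp
  qed
qed

lemma ray_solves: "solves_pfaff b (ball c \<rho>) (\<lambda>x. \<phi> 1 (x - c))"
  unfolding solves_pfaff_def
proof (intro conjI ballI allI)
  show "continuous_on (ball c \<rho>) (\<lambda>x. \<phi> 1 (x - c))"
    unfolding continuous_on_iff
  proof (intro ballI allI impI)
    fix x and e :: real assume x: "x \<in> ball c \<rho>" and e: "e > 0"
    have y: "x - c \<in> ball 0 \<rho>" using x by (simp add: dist_norm norm_minus_commute)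
    obtain d where d: "d > 0" "\<And>y'. y' \<in> ball 0 \<rho> \<Longrightarrow> norm (y' - (x - c)) < d \<Longrightarrow>
        (\<forall>t\<in>{0..1}. \<bar>\<phi> t y' - \<phi> t (x - c)\<bar> \<le> e / 2)"
      using ray_solution_uniformly_close[OF y, of "e/2"] e by auto
    show "\<exists>d>0. \<forall>x'\<in>ball c \<rho>. dist x' x < d \<longrightarrow> dist (\<phi> 1 (x' - c)) (\<phi> 1 (x - c)) < e"
    proof (intro exI[of _ d] conjI d(1) ballI impI)
      fix x' assume x': "x' \<in> ball c \<rho>" and "dist x' x < d"
      then have "norm ((x' - c) - (x - c)) < d" by (simp add: dist_norm)
      moreover have "x' - c \<in> ball 0 \<rho>" using x' by (simp add: dist_norm norm_minus_commute)
      ultimately have "\<bar>\<phi> 1 (x' - c) - \<phi> 1 (x - c)\<bar> \<le> e / 2" using d(2) by auto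
      then show "dist (\<phi> 1 (x' - c)) (\<phi> 1 (x - c)) < e" using e by (simp add: dist_real_def)
    qed
  qed
next
  fix x assume x: "x \<in> ball c \<rho>"
  have y: "x - c \<in> ball 0 \<rho>" using x by (simp add: dist_norm norm_minus_commute)
  show "\<phi> 1 (x - c) > 0" using range[OF y, of 1] m1 by auto
  fix i
  show "((\<lambda>t. \<phi> 1 (x + t *\<^sub>R axis i 1 - c)) has_real_derivative b x (\<phi> 1 (x - c)) $ i) (at 0)"
    using ray_solution_has_partial[OF y, of i] by (simp add: algebra_simps)
qed

end

section \<open>Local existence\<close>

lemma continuous_on_SUP_abs:
  fixes G :: "real \<Rightarrow> real \<Rightarrow> real"
  assumes lip: "\<And>t w w'. \<bar>G t w - G t w'\<bar> \<le> L * \<bar>w - w'\<bar>" and L: "L \<ge> 0"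
    and bnd: "\<And>t w. \<bar>G t w\<bar> \<le> B"
  shows "continuous_on UNIV (\<lambda>w. SUP t\<in>{0..1}. \<bar>G t w\<bar>)"
proof -
  define h where "h = (\<lambda>w. SUP t\<in>{0..1::real}. \<bar>G t w\<bar>)"
  have bdd: "bdd_above ((\<lambda>t. \<bar>G t w\<bar>) ` {0..1})" for w
    using bnd by (intro bdd_aboveI[of _ B]) auto
  have hlip: "h w \<le> h w' + L * \<bar>w - w'\<bar>" for w w'
    unfolding h_def
  proof (rule cSUP_least)
    fix t :: real assume t: "t \<in> {0..1}"
    have "\<bar>G t w\<bar> \<le> \<bar>G t w'\<bar> + L * \<bar>w - w'\<bar>" using lip[of t w w'] by linarith
    also have "\<dots> \<le> (SUP t\<in>{0..1}. \<bar>G t w'\<bar>) + L * \<bar>w - w'\<bar>"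
      using cSUP_upper[OF t bdd] by simp
    finally show "\<bar>G t w\<bar> \<le> (SUP t\<in>{0..1}. \<bar>G t w'\<bar>) + L * \<bar>w - w'\<bar>" .
  qed auto
  have "\<bar>h w' - h w\<bar> \<le> (L + 1) * \<bar>w' - w\<bar>" for w w'
    using hlip[of w w'] hlip[of w' w] L by (auto simp: abs_minus_commute algebra_simps abs_le_iff)
  then have "\<exists>d>0. \<forall>w'. dist w' w < d \<longrightarrow> dist (h w') (h w) < e" if "e > 0" for w e
    using that L by (intro exI[of _ "e / (L + 1)"])
      (auto simp: dist_real_def pos_less_divide_eq mult.commute intro: le_less_trans)
  then show ?thesis unfolding continuous_on_iff h_def by blast
qed

locale pfaff_growth = pfaff_system U b for U :: "(real^'n) set" and b +
  fixes f :: "real \<Rightarrow> real" and v0 :: real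
  assumes f_pos: "\<And>v. v > 0 \<Longrightarrow> f v > 0"
    and f_int: "\<And>a c. 0 < a \<Longrightarrow> a \<le> c \<Longrightarrow> (\<lambda>s. 1 / f s) integrable_on {a..c}"
    and v0_pos: "v0 > 0"
    and F_top: "filterlim (Fint f v0) at_top at_top"
    and F_bot: "filterlim (Fint f v0) at_bot (at_right 0)"
    and b_growth: "\<And>K. compact K \<Longrightarrow> K \<subseteq> U \<Longrightarrow> \<exists>A. \<forall>x\<in>K. \<forall>w>0. norm (b x w) \<le> A * f w"
begin

text \<open>The right-hand side is clamped to \<open>[0, 1] \<times> [m1, m2]\<close>, where \<open>b\<close> is bounded and Lipschitz
  in \<open>v\<close>, so that Picard iteration applies.\<close>
lemma clamped_ray_field:
  fixes y :: "real^'n"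
  assumes K: "compact K" "K \<subseteq> U" and cK: "cball c \<rho> \<subseteq> K" and y: "y \<in> ball 0 \<rho>"
    and m: "0 < m1" "m1 \<le> m2"
  obtains G :: "real \<Rightarrow> real \<Rightarrow> real" and L B where "continuous_on UNIV (\<lambda>p. G (fst p) (snd p))"
    "L \<ge> 0" "\<And>t w w'. \<bar>G t w - G t w'\<bar> \<le> L * \<bar>w - w'\<bar>" "\<And>t w. \<bar>G t w\<bar> \<le> B"
    "\<And>t w. t \<in> {0..1} \<Longrightarrow> w \<in> {m1..m2} \<Longrightarrow> G t w = ray_field b c y t w"
proof -
  define Q where "Q = K \<times> {m1..m2}"
  have Qc: "compact Q" unfolding Q_def using K by (intro compact_Times) auto
  have QO: "Q \<subseteq> \<Omega>" unfolding Q_def \<Omega>_def using K m by auto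
  obtain Bb where Bb: "\<And>z j. z \<in> Q \<Longrightarrow> \<bar>bcomp b j z\<bar> \<le> Bb"
    using b_bounded[OF Qc QO] by blast
  obtain Lv where Lv: "Lv \<ge> 0" "\<forall>x\<in>K. \<forall>w\<in>{m1..m2}. \<forall>w'\<in>{m1..m2}. \<forall>j. \<bar>b x w $ j - b x w' $ j\<bar> \<le> Lv * \<bar>w - w'\<bar>"
    using b_lipschitz_v[OF K m(1), of m2] by blast
  define ct where "ct = (\<lambda>t::real. max 0 (min 1 t))"
  define cl where "cl = (\<lambda>w::real. max m1 (min m2 w))"
  have inQ: "(c + ct t *\<^sub>R y, cl w) \<in> Q" for t w
  proof -
    have "norm (ct t *\<^sub>R y) \<le> \<rho>" using y mult_mono[of "ct t" 1 "norm y" \<rho>] by (auto simp: ct_def)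
    then show ?thesis using cK m unfolding Q_def cl_def by (auto simp: dist_norm)
  qed
  define NY where "NY = (\<Sum>j\<in>UNIV. \<bar>y $ j\<bar>)"
  have NY0: "NY \<ge> 0" unfolding NY_def by (auto intro: sum_nonneg)
  define G where "G = (\<lambda>t w. ray_field b c y (ct t) (cl w))"
  show ?thesis
  proof (rule that[of G "Lv * NY" "Bb * NY"])
    have "continuous_on UNIV (\<lambda>p::real\<times>real. (c + ct (fst p) *\<^sub>R y, cl (snd p)))"
      unfolding ct_def cl_def by (intro continuous_intros)
    then have "continuous_on UNIV (\<lambda>p::real\<times>real. bcomp b j (c + ct (fst p) *\<^sub>R y, cl (snd p)))" for j
      by (rule continuous_on_compose2[OF continuous_on_subset[OF b_continuous QO]]) (use inQ in auto)
    then show "continuous_on UNIV (\<lambda>p. G (fst p) (snd p))"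
      unfolding G_def ray_field_eq_sum by (intro continuous_intros) auto
    show "\<bar>G t w - G t w'\<bar> \<le> Lv * NY * \<bar>w - w'\<bar>" for t w w'
    proof -
      have "\<bar>b (c + ct t *\<^sub>R y) (cl w) $ j - b (c + ct t *\<^sub>R y) (cl w') $ j\<bar> \<le> Lv * \<bar>cl w - cl w'\<bar>" for j
        using Lv(2) inQ[of t w] inQ[of t w'] unfolding Q_def by blast
      also have "Lv * \<bar>cl w - cl w'\<bar> \<le> Lv * \<bar>w - w'\<bar>"
        using Lv(1) unfolding cl_def by (intro mult_left_mono) (auto simp: max_def min_def)
      finally have "\<bar>\<Sum>j\<in>UNIV. (b (c + ct t *\<^sub>R y) (cl w) $ j - b (c + ct t *\<^sub>R y) (cl w') $ j) * y $ j\<bar>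
          \<le> (Lv * \<bar>w - w'\<bar>) * NY"
        unfolding NY_def by (rule abs_sum_mult_le)
      then show ?thesis
        unfolding G_def ray_field_eq_sum by (simp add: sum_subtractf[symmetric] algebra_simps)
    qed
    show "\<bar>G t w\<bar> \<le> Bb * NY" for t w
      unfolding G_def ray_field_eq_sum NY_def by (rule abs_sum_mult_le) (use Bb inQ in auto)
    show "G t w = ray_field b c y t w" if "t \<in> {0..1}" "w \<in> {m1..m2}" for t w
      using that unfolding G_def ct_def cl_def by auto
  qed (use Lv(1) NY0 in auto)
qed

lemma ray_ode_solution:
  fixes y :: "real^'n"
  assumes K: "compact K" "K \<subseteq> U" and cK: "cball c \<rho> \<subseteq> K" and rho: "\<rho> > 0"
    and A0: "\<forall>x\<in>K. \<forall>w>0. norm (b x w) \<le> A0 * f w"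
    and m: "0 < m1" "m1 \<le> v" "v \<le> m2"
    and I1: "integral {m1..v} (\<lambda>s. 1 / f s) > \<bar>A0\<bar> * \<rho> + 1"
    and I2: "integral {v..m2} (\<lambda>s. 1 / f s) > \<bar>A0\<bar> * \<rho> + 1"
    and y: "y \<in> ball 0 \<rho>"
  obtains u where "u 0 = v" "continuous_on {0..1} u"
    "\<And>t. 0 < t \<Longrightarrow> t \<le> 1 \<Longrightarrow> (u has_real_derivative ray_field b c y t (u t)) (at t)"
    "\<And>t. 0 \<le> t \<Longrightarrow> t \<le> 1 \<Longrightarrow> u t \<in> {m1..m2}"
proof -
  have m12: "m1 \<le> m2" using m by linarith
  obtain G :: "real \<Rightarrow> real \<Rightarrow> real" and L B where Gc: "continuous_on UNIV (\<lambda>p. G (fst p) (snd p))"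
    and L: "L \<ge> 0" and Glip: "\<And>t w w'. \<bar>G t w - G t w'\<bar> \<le> L * \<bar>w - w'\<bar>" and Gb: "\<And>t w. \<bar>G t w\<bar> \<le> B"
    and Gray: "\<And>t w. t \<in> {0..1} \<Longrightarrow> w \<in> {m1..m2} \<Longrightarrow> G t w = ray_field b c y t w"
    using clamped_ray_field[OF K cK y m(1) m12] by blast
  obtain u where u0: "u 0 = v" and uc: "continuous_on {0..2} u"
    and ud: "\<And>t. 0 < t \<Longrightarrow> t < 2 \<Longrightarrow> (u has_real_derivative G t (u t)) (at t)"
    using picard_existence[OF Gc Glip L Gb, of v] by auto
  define h where "h = (\<lambda>w. SUP t\<in>{0..1}. \<bar>G t w\<bar>)"
  have hup: "\<bar>G t w\<bar> \<le> h w" if "t \<in> {0..1}" for t w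
    unfolding h_def using Gb by (intro cSUP_upper[OF that] bdd_aboveI[of _ B]) auto
  have hf: "h w \<le> (\<bar>A0\<bar> * \<rho> + 1) * f w" if w: "m1 \<le> w" "w \<le> m2" for w
    unfolding h_def
  proof (rule cSUP_least)
    fix t :: real assume t: "t \<in> {0..1}"
    have "norm (t *\<^sub>R y) \<le> \<rho>" using t y mult_mono[of t 1 "norm y" \<rho>] by auto
    then have "c + t *\<^sub>R y \<in> K" using cK by (auto simp: dist_norm)
    then have "norm (b (c + t *\<^sub>R y) w) \<le> A0 * f w" using A0 w m by auto
    also have "\<dots> \<le> \<bar>A0\<bar> * f w" using f_pos[of w] w m by (intro mult_right_mono) auto
    finally have bn: "norm (b (c + t *\<^sub>R y) w) \<le> \<bar>A0\<bar> * f w" .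
    have "\<bar>G t w\<bar> = \<bar>b (c + t *\<^sub>R y) w \<bullet> y\<bar>" using Gray[OF t] w unfolding ray_field_def by simp
    also have "\<dots> \<le> norm (b (c + t *\<^sub>R y) w) * norm y" by (rule Cauchy_Schwarz_ineq2)
    also have "\<dots> \<le> (\<bar>A0\<bar> * f w) * \<rho>" using bn y f_pos[of w] w m by (intro mult_mono) auto
    also have "\<dots> \<le> (\<bar>A0\<bar> * \<rho> + 1) * f w" using f_pos[of w] w m by (simp add: algebra_simps)
    finally show "\<bar>G t w\<bar> \<le> (\<bar>A0\<bar> * \<rho> + 1) * f w" .
  qed auto
  have hc: "continuous_on UNIV h" unfolding h_def by (rule continuous_on_SUP_abs[OF Glip L Gb])
  have h0: "h w \<ge> 0" for w
  proof -
    have "\<bar>G 0 w\<bar> \<le> h w" by (rule hup) simp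
    then show ?thesis by linarith
  qed
  have ubar: "m1 < u t \<and> u t < m2" if t: "0 \<le> t" "t \<le> 1" for t
  proof (rule solution_stays_between_barriers[OF continuous_on_subset[OF uc] _ _ hc h0 hf f_pos
        f_int[OF m(1) m12] _ m(1) _ _ _ _ t])
    show "(u has_real_derivative G s (u s)) (at s)" if "0 < s" "s < 1" for s using ud that by auto
    show "\<bar>G s (u s)\<bar> \<le> h (u s)" if "0 < s" "s < 1" for s using hup that by auto
  qed (use m u0 I1 I2 rho in \<open>auto simp: add_nonneg_pos\<close>)
  show ?thesis
  proof (rule that[OF u0 continuous_on_subset[OF uc]])
    show "(u has_real_derivative ray_field b c y t (u t)) (at t)" if "0 < t" "t \<le> 1" for t
      using ud[of t] ubar[of t] Gray[of t "u t"] that by auto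
    show "u t \<in> {m1..m2}" if "0 \<le> t" "t \<le> 1" for t using ubar[OF that] by auto
  qed auto
qed

lemma local_solution_exists:
  assumes K: "compact K" "K \<subseteq> U" and cK: "cball c \<rho> \<subseteq> K" and rho: "\<rho> > 0" and v: "v > 0"
  shows "\<exists>V. solves_pfaff b (ball c \<rho>) V \<and> V c = v"
proof -
  obtain A0 where A0: "\<forall>x\<in>K. \<forall>w>0. norm (b x w) \<le> A0 * f w" using b_growth[OF K] by blast
  obtain m1 m2 where m: "0 < m1" "m1 \<le> v" "v \<le> m2"
    and I: "integral {m1..v} (\<lambda>s. 1 / f s) > \<bar>A0\<bar> * \<rho> + 1" "integral {v..m2} (\<lambda>s. 1 / f s) > \<bar>A0\<bar> * \<rho> + 1"
    using barrier_levels_exist[OF v0_pos v f_int F_top F_bot] by blast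
  define P where "P = (\<lambda>(y::real^'n) u. u 0 = v \<and> continuous_on {0..1} u \<and>
     (\<forall>t. 0 < t \<and> t \<le> 1 \<longrightarrow> (u has_real_derivative ray_field b c y t (u t)) (at t)) \<and>
     (\<forall>t. 0 \<le> t \<and> t \<le> 1 \<longrightarrow> u t \<in> {m1..m2}))"
  have ex: "\<exists>u. P y u" if y: "y \<in> ball 0 \<rho>" for y
  proof -
    obtain u where "u 0 = v" "continuous_on {0..1} u"
      "\<And>t. 0 < t \<Longrightarrow> t \<le> 1 \<Longrightarrow> (u has_real_derivative ray_field b c y t (u t)) (at t)"
      "\<And>t. 0 \<le> t \<Longrightarrow> t \<le> 1 \<Longrightarrow> u t \<in> {m1..m2}"
      using ray_ode_solution[OF K cK rho A0 m I y] by blast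
    then show ?thesis unfolding P_def by blast
  qed
  define \<phi> where "\<phi> = (\<lambda>t y. (SOME u. P y u) t)"
  have "P y (\<lambda>t. \<phi> t y)" if "y \<in> ball 0 \<rho>" for y
    unfolding \<phi>_def using someI_ex[OF ex[OF that]] by simp
  then have \<phi>: "\<phi> 0 y = v" "continuous_on {0..1} (\<lambda>t. \<phi> t y)"
    "\<And>t. 0 < t \<Longrightarrow> t \<le> 1 \<Longrightarrow> ((\<lambda>t. \<phi> t y) has_real_derivative ray_field b c y t (\<phi> t y)) (at t)"
    "\<And>t. 0 \<le> t \<Longrightarrow> t \<le> 1 \<Longrightarrow> \<phi> t y \<in> {m1..m2}"
    if "y \<in> ball 0 \<rho>" for y
    using that unfolding P_def by blast+
  interpret ray_family U b K c \<rho> m1 m2 v \<phi>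
    by unfold_locales (use K cK rho m \<phi> in auto)
  have "\<phi> 1 0 = v"
  proof -
    have y0: "(0::real^'n) \<in> ball 0 \<rho>" using rho by simp
    have "\<phi> 1 0 = \<phi> 0 0"
    proof (rule DERIV_isconst_end[of 0 1 "\<lambda>t. \<phi> t 0"])
      show "continuous_on {0..1} (\<lambda>t. \<phi> t 0)" by (rule cont[OF y0])
      show "((\<lambda>t. \<phi> t 0) has_real_derivative 0) (at t)" if "0 < t" "t < 1" for t
        using deriv[OF y0, of t] that by (simp add: ray_field_def)
    qed simp
    then show ?thesis using init[OF y0] by simp
  qed
  then show ?thesis using ray_solves by (intro exI[of _ "\<lambda>x. \<phi> 1 (x - c)"]) auto
qed

end

section \<open>Continuation along paths\<close>

lemma compact_thickening_in_open:
  fixes K0 :: "'a::euclidean_space set"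
  assumes "compact K0" "open U" "K0 \<subseteq> U"
  obtains \<rho> K where "\<rho> > 0" "compact K" "K \<subseteq> U" "\<And>c. c \<in> K0 \<Longrightarrow> cball c \<rho> \<subseteq> K"
proof -
  obtain e where e: "e > 0" "\<And>x. x \<in> K0 \<Longrightarrow> ball x e \<subseteq> U"
    using Heine_Borel_lemma[OF assms(1), of "{U}"] assms(2,3) by auto
  define K where "K = {x + y | x y. x \<in> K0 \<and> y \<in> cball 0 (e / 2)}"
  show ?thesis
  proof (rule that[of "e / 2" K])
    show "compact K" unfolding K_def by (intro compact_sums assms(1) compact_cball)
    show "K \<subseteq> U" unfolding K_def using e by (force simp: dist_norm)
    show "cball c (e / 2) \<subseteq> K" if "c \<in> K0" for c
    proof
      fix z assume "z \<in> cball c (e / 2)"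
      then have "z = c + (z - c)" "z - c \<in> cball 0 (e / 2)" by (auto simp: dist_norm norm_minus_commute)
      then show "z \<in> K" unfolding K_def using that by blast
    qed
  qed (use e in simp)
qed

definition grid_index :: "nat \<Rightarrow> real \<Rightarrow> nat" where
  "grid_index N s = min (nat \<lfloor>s * real N\<rfloor>) (N - 1)"

lemma grid_index_bracket:
  assumes N: "N > 0" and s: "0 \<le> s" "s \<le> 1"
  shows "grid_index N s < N" "real (grid_index N s) / real N \<le> s"
    "s \<le> real (grid_index N s) / real N + 1 / real N"
proof -
  show "grid_index N s < N" unfolding grid_index_def using N by auto
  have f0: "\<lfloor>s * real N\<rfloor> \<ge> 0" using s by simp
  have NR: "real N > 0" using N by simp
  have "real (grid_index N s) \<le> real_of_int \<lfloor>s * real N\<rfloor>" unfolding grid_index_def using f0 by linarith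
  also have "\<dots> \<le> s * real N" by (rule of_int_floor_le)
  finally show "real (grid_index N s) / real N \<le> s" using NR by (simp add: divide_le_eq)
  have "s * real N \<le> real (grid_index N s) + 1"
  proof (cases "nat \<lfloor>s * real N\<rfloor> \<le> N - 1")
    case True
    then have "real (grid_index N s) = real_of_int \<lfloor>s * real N\<rfloor>" unfolding grid_index_def using f0 by simp
    then show ?thesis using real_of_int_floor_add_one_gt[of "s * real N"] by linarith
  next
    case False
    then have "real (grid_index N s) + 1 = real N" unfolding grid_index_def using N by simp
    then show ?thesis using s NR by (simp add: mult_left_le_one_le)
  qed
  then show "s \<le> real (grid_index N s) / real N + 1 / real N" using NR by (simp add: field_simps)
qed

text \<open>Near every parameter \<open>t\<close> the glued function \<open>s \<mapsto> V (grid_index N s) (\<gamma> s)\<close> is the single solution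
  \<open>V (grid_index N t)\<close>, because neighbouring solutions agree on the overlaps.\<close>
lemma continues_along_from_chain:
  fixes \<gamma> :: "real \<Rightarrow> real^'n" and V :: "nat \<Rightarrow> real^'n \<Rightarrow> real" and N :: nat
  defines "\<tau> \<equiv> \<lambda>k::nat. real k / real N"
  assumes N: "N > 0" "1 / real N < \<delta> / 2"
    and close: "\<And>s t. s \<in> {0..1} \<Longrightarrow> t \<in> {0..1} \<Longrightarrow> \<bar>s - t\<bar> < \<delta> \<Longrightarrow> dist (\<gamma> s) (\<gamma> t) < \<rho> / 2"
    and balls: "\<And>k. k < N \<Longrightarrow> ball (\<gamma> (\<tau> k)) \<rho> \<subseteq> U"
    and V: "\<And>k. k < N \<Longrightarrow> solves_pfaff b (ball (\<gamma> (\<tau> k)) \<rho>) (V k)" "V 0 (\<gamma> 0) = w"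
    and agree: "\<And>k x. Suc k < N \<Longrightarrow> x \<in> ball (\<gamma> (\<tau> (Suc k))) (\<rho> / 2) \<Longrightarrow> V k x = V (Suc k) x"
  shows "continues_along b U w \<gamma>"
proof -
  define kk where "kk = grid_index N"
  have br: "kk s < N" "\<tau> (kk s) \<le> s" "s \<le> \<tau> (kk s) + 1 / real N" if "s \<in> {0..1}" for s
    using grid_index_bracket[OF N(1)] that unfolding kk_def \<tau>_def by auto
  have \<tau>S: "\<tau> (Suc k) = \<tau> k + 1 / real N" for k unfolding \<tau>_def by (simp add: add_divide_distrib)
  have node_near: "dist (\<gamma> s) (\<gamma> (\<tau> (kk t))) < \<rho> / 2"
    if "s \<in> {0..1}" "t \<in> {0..1}" "\<bar>s - t\<bar> < 1 / real N" for s t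
  proof -
    have "\<bar>s - \<tau> (kk t)\<bar> < \<delta>" using br[OF that(2)] that(3) N(2) by linarith
    moreover have "\<tau> (kk t) \<in> {0..1}" using br[OF that(2)] unfolding \<tau>_def by auto
    ultimately show ?thesis using close[OF that(1)] by blast
  qed
  have same: "V (kk t) (\<gamma> s) = V (kk s) (\<gamma> s)"
    if st: "s \<in> {0..1}" "t \<in> {0..1}" "\<bar>s - t\<bar> < 1 / real N" for s t
  proof -
    have "\<tau> (kk s) < \<tau> (Suc (Suc (kk t)))" "\<tau> (kk t) < \<tau> (Suc (Suc (kk s)))"
      using br[OF st(1)] br[OF st(2)] st(3) \<tau>S[of "Suc (kk t)"] \<tau>S[of "kk t"] \<tau>S[of "Suc (kk s)"]
        \<tau>S[of "kk s"] by linarith+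
    then consider "kk s = kk t" | "kk s = Suc (kk t)" | "kk t = Suc (kk s)"
      unfolding \<tau>_def using N(1) by (simp add: divide_less_cancel) linarith
    then show ?thesis
    proof cases
      case 2
      have "\<bar>s - s\<bar> < 1 / real N" using N by simp
      from node_near[OF st(1) st(1) this] have "\<gamma> s \<in> ball (\<gamma> (\<tau> (Suc (kk t)))) (\<rho> / 2)"
        using 2 by (simp add: dist_commute)
      then show ?thesis using agree[of "kk t" "\<gamma> s"] br[OF st(1)] 2 by simp
    next
      case 3
      from node_near[OF st] have "\<gamma> s \<in> ball (\<gamma> (\<tau> (Suc (kk s)))) (\<rho> / 2)"
        using 3 by (simp add: dist_commute)
      then show ?thesis using agree[of "kk s" "\<gamma> s"] br[OF st(2)] 3 by simp
    qed simp
  qed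
  show ?thesis unfolding continues_along_def
  proof (intro exI[of _ "\<lambda>s. V (kk s) (\<gamma> s)"] conjI ballI)
    show "V (kk 0) (\<gamma> 0) = w" using V(2) unfolding kk_def grid_index_def by simp
    fix t :: real assume t: "t \<in> {0..1}"
    have near_t: "\<gamma> s \<in> ball (\<gamma> (\<tau> (kk t))) \<rho>" if "s \<in> {0..1}" "\<bar>s - t\<bar> < 1 / real N" for s
      using node_near[OF that(1) t that(2)] zero_le_dist[of "\<gamma> s" "\<gamma> (\<tau> (kk t))"]
        dist_commute[of "\<gamma> s" "\<gamma> (\<tau> (kk t))"]
      unfolding mem_ball by linarith
    show "\<exists>N Vf. open N \<and> \<gamma> t \<in> N \<and> N \<subseteq> U \<and> solves_pfaff b N Vf \<and>
       (\<exists>e>0. \<forall>s\<in>{0..1}. \<bar>s - t\<bar> < e \<longrightarrow> \<gamma> s \<in> N \<and> Vf (\<gamma> s) = V (kk s) (\<gamma> s))"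
    proof (intro exI[of _ "ball (\<gamma> (\<tau> (kk t))) \<rho>"] exI[of _ "V (kk t)"] exI[of _ "1 / real N"] conjI)
      show "\<gamma> t \<in> ball (\<gamma> (\<tau> (kk t))) \<rho>" by (rule near_t[OF t]) (use N in simp)
      show "ball (\<gamma> (\<tau> (kk t))) \<rho> \<subseteq> U" by (rule balls) (use br t in auto)
      show "solves_pfaff b (ball (\<gamma> (\<tau> (kk t))) \<rho>) (V (kk t))" by (rule V(1)) (use br t in auto)
      show "\<forall>s\<in>{0..1}. \<bar>s - t\<bar> < 1 / real N \<longrightarrow> \<gamma> s \<in> ball (\<gamma> (\<tau> (kk t))) \<rho>
          \<and> V (kk t) (\<gamma> s) = V (kk s) (\<gamma> s)"
        using near_t same[OF _ t] by blast
    qed (use N in auto)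
  qed
qed

context pfaff_growth begin

lemma solution_chain:
  fixes p :: "nat \<Rightarrow> real^'n"
  assumes Nn: "Nn > 0" and w: "w > 0"
    and balls: "\<And>k. k < Nn \<Longrightarrow> ball (p k) \<rho> \<subseteq> U"
    and exist: "\<And>k v. k < Nn \<Longrightarrow> v > 0 \<Longrightarrow> \<exists>V. solves_pfaff b (ball (p k) \<rho>) V \<and> V (p k) = v"
    and near: "\<And>k. Suc k < Nn \<Longrightarrow> dist (p k) (p (Suc k)) < \<rho> / 2"
  obtains V where "\<And>k. k < Nn \<Longrightarrow> solves_pfaff b (ball (p k) \<rho>) (V k)" "V 0 (p 0) = w"
    "\<And>k x. Suc k < Nn \<Longrightarrow> x \<in> ball (p (Suc k)) (\<rho> / 2) \<Longrightarrow> V k x = V (Suc k) x"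
proof -
  define sol where "sol = (\<lambda>k v. SOME V. solves_pfaff b (ball (p k) \<rho>) V \<and> V (p k) = v)"
  have solP: "solves_pfaff b (ball (p k) \<rho>) (sol k v) \<and> sol k v (p k) = v" if "k < Nn" "v > 0" for k v
    unfolding sol_def by (rule someI_ex[OF exist[OF that]])
  define wv where "wv = rec_nat w (\<lambda>k wk. sol k wk (p (Suc k)))"
  have wv0: "wv 0 = w" and wvS: "wv (Suc k) = sol k (wv k) (p (Suc k))" for k
    unfolding wv_def by simp_all
  define V where "V = (\<lambda>k. sol k (wv k))"
  have inv: "wv k > 0 \<and> solves_pfaff b (ball (p k) \<rho>) (V k) \<and> V k (p k) = wv k" if "k < Nn" for k
    using that
  proof (induction k)
    case 0
    then show ?case unfolding V_def using solP[OF _ w, of 0] wv0 w by auto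
  next
    case (Suc k)
    then have IH: "solves_pfaff b (ball (p k) \<rho>) (V k)" by auto
    have "dist (p k) (p (Suc k)) < \<rho>" using near[OF Suc.prems] zero_le_dist[of "p k" "p (Suc k)"] by linarith
    then have "p (Suc k) \<in> ball (p k) \<rho>" by simp
    then have pos: "wv (Suc k) > 0" using IH unfolding wvS V_def solves_pfaff_def by auto
    show ?case using solP[OF Suc.prems pos] pos unfolding V_def by auto
  qed
  show ?thesis
  proof (rule that)
    show "solves_pfaff b (ball (p k) \<rho>) (V k)" if "k < Nn" for k using inv[OF that] by simp
    show "V 0 (p 0) = w" using inv[OF Nn] wv0 by simp
    fix k x assume k: "Suc k < Nn" and x: "x \<in> ball (p (Suc k)) (\<rho> / 2)"
    have \<rho>: "\<rho> > 0" using near[OF k] zero_le_dist[of "p k" "p (Suc k)"] by linarith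
    have sub: "ball (p (Suc k)) (\<rho> / 2) \<subseteq> ball (p k) \<rho>"
    proof
      fix z assume "z \<in> ball (p (Suc k)) (\<rho> / 2)"
      then show "z \<in> ball (p k) \<rho>"
        using near[OF k] dist_triangle[of "p k" z "p (Suc k)"] by (simp add: dist_commute)
    qed
    show "V k x = V (Suc k) x"
    proof (rule solves_pfaff_unique)
      show "solves_pfaff b (ball (p (Suc k)) (\<rho> / 2)) (V k)"
        using solves_pfaff_subset[OF _ sub] inv[of k] k by simp
      show "solves_pfaff b (ball (p (Suc k)) (\<rho> / 2)) (V (Suc k))"
        using solves_pfaff_subset[of "ball (p (Suc k)) \<rho>"] inv[OF k] \<rho> by (simp add: subset_ball)
      show "ball (p (Suc k)) (\<rho> / 2) \<subseteq> U" using sub balls[of k] k by simp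
      show "p (Suc k) \<in> ball (p (Suc k)) (\<rho> / 2)" using \<rho> by simp
      show "V k (p (Suc k)) = V (Suc k) (p (Suc k))" using inv[OF k] unfolding wvS V_def by simp
    qed (use x in auto)
  qed
qed

lemma path_continues:
  assumes \<gamma>: "path \<gamma>" "path_image \<gamma> \<subseteq> U" and w: "w > 0"
  shows "continues_along b U w \<gamma>"
proof -
  obtain \<rho> K where \<rho>: "\<rho> > 0" and K: "compact K" "K \<subseteq> U"
    and cK: "\<And>c. c \<in> path_image \<gamma> \<Longrightarrow> cball c \<rho> \<subseteq> K"
    using compact_thickening_in_open[OF compact_path_image[OF \<gamma>(1)] U_open \<gamma>(2)] by blast
  have "uniformly_continuous_on {0..1} \<gamma>"
    using \<gamma>(1) unfolding path_def by (rule compact_uniformly_continuous[OF _ compact_Icc])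
  then obtain \<delta> where \<delta>: "\<delta> > 0"
    and close: "\<And>s t. s \<in> {0..1} \<Longrightarrow> t \<in> {0..1} \<Longrightarrow> \<bar>s - t\<bar> < \<delta> \<Longrightarrow> dist (\<gamma> s) (\<gamma> t) < \<rho> / 2"
    unfolding uniformly_continuous_on_def dist_real_def using \<rho> by (metis half_gt_zero)
  obtain N :: nat where N: "N > 0" "1 / real N < \<delta> / 2"
    using reals_Archimedean[of "\<delta> / 2"] \<delta> by (metis half_gt_zero inverse_eq_divide zero_less_Suc)
  define \<tau> where "\<tau> = (\<lambda>k::nat. real k / real N)"
  have on_path: "\<gamma> (\<tau> k) \<in> path_image \<gamma>" if "k \<le> N" for k
    unfolding path_image_def \<tau>_def using that N by auto
  have balls: "ball (\<gamma> (\<tau> k)) \<rho> \<subseteq> U" if "k < N" for k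
    using ball_subset_cball cK[OF on_path[of k]] K(2) that by fastforce
  have exist: "\<exists>V. solves_pfaff b (ball (\<gamma> (\<tau> k)) \<rho>) V \<and> V (\<gamma> (\<tau> k)) = v" if "k < N" "v > 0" for k v
    using local_solution_exists[OF K cK[OF on_path] \<rho> that(2)] that(1) by auto
  have near: "dist (\<gamma> (\<tau> k)) (\<gamma> (\<tau> (Suc k))) < \<rho> / 2" if "Suc k < N" for k
  proof (rule close)
    have "\<tau> k - \<tau> (Suc k) = - (1 / real N)" unfolding \<tau>_def by (simp add: diff_divide_distrib[symmetric])
    moreover have "1 / real N < \<delta>" using N \<delta> by (simp add: field_simps)
    ultimately show "\<bar>\<tau> k - \<tau> (Suc k)\<bar> < \<delta>" by simp
  qed (use that N in \<open>auto simp: \<tau>_def\<close>)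
  obtain V where V: "\<And>k. k < N \<Longrightarrow> solves_pfaff b (ball (\<gamma> (\<tau> k)) \<rho>) (V k)" "V 0 (\<gamma> (\<tau> 0)) = w"
    and agree: "\<And>k x. Suc k < N \<Longrightarrow> x \<in> ball (\<gamma> (\<tau> (Suc k))) (\<rho> / 2) \<Longrightarrow> V k x = V (Suc k) x"
    using solution_chain[where p="\<lambda>k. \<gamma> (\<tau> k)", OF N(1) w balls exist near] by blast
  show ?thesis
    by (rule continues_along_from_chain[where \<gamma>=\<gamma> and N=N and V=V, OF N close])
      (use balls V agree in \<open>auto simp: \<tau>_def\<close>)
qed

end

theorem lemma4p1:
  fixes U :: "(real^'n) set"
    and g :: "real^'n \<Rightarrow> real^'n^'n"
    and b :: "real^'n \<Rightarrow> real \<Rightarrow> real^'n"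
    and f :: "real \<Rightarrow> real"
    and v0 w :: real
  assumes U_open: "open U" and U0: "0 \<in> U"
    and g_smooth: "\<And>i j. smooth_on U (\<lambda>x. g x $ i $ j)"
    and g_sym: "\<And>x. x \<in> U \<Longrightarrow> transpose (g x) = g x"
    and g_posdef: "\<And>x c. x \<in> U \<Longrightarrow> c \<noteq> 0 \<Longrightarrow> c \<bullet> (g x *v c) > 0"
    and b_smooth: "\<And>i. smooth_on (U \<times> {0<..}) (bcomp b i)"
    and b_compat: "\<And>i j x v. x \<in> U \<Longrightarrow> v > 0 \<Longrightarrow>
        pd_x j (bcomp b i) x v + (b x v $ j) * pd_v (bcomp b i) x v
      = pd_x i (bcomp b j) x v + (b x v $ i) * pd_v (bcomp b j) x v"
    and f_pos: "\<And>v. v > 0 \<Longrightarrow> f v > 0"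
    and f_int: "\<And>a c. 0 < a \<Longrightarrow> a \<le> c \<Longrightarrow> (\<lambda>s. 1 / f s) integrable_on {a..c}"
    and v0_pos: "v0 > 0"
    and F_top: "filterlim (Fint f v0) at_top at_top"
    and F_bot: "filterlim (Fint f v0) at_bot (at_right 0)"
    and b_fnorm: "\<exists>C. \<forall>x\<in>U. \<forall>v>0. gnorm (g x) (b x v) \<le> C * f v"
    and w_pos: "w > 0"
  shows "\<forall>\<gamma>. path \<gamma> \<and> path_image \<gamma> \<subseteq> U \<and> pathstart \<gamma> = 0 \<longrightarrow> continues_along b U w \<gamma>"
proof -
  obtain C where C: "\<forall>x\<in>U. \<forall>v>0. gnorm (g x) (b x v) \<le> C * f v" using b_fnorm by blast
  interpret pfaff_growth U b f v0
  proof unfold_locales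
    show "\<exists>A. \<forall>x\<in>K. \<forall>w>0. norm (b x w) \<le> A * f w" if "compact K" "K \<subseteq> U" for K
      using growth_bound_from_gnorm[OF smooth_on_continuous_on[OF g_smooth] g_sym g_posdef C that] .
  qed (use U_open b_smooth b_compat f_pos f_int v0_pos F_top F_bot in auto)
  show ?thesis using path_continues w_pos by blast
qed

end
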